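(* Fix $D\ge1$, $\bar L\ge1$, a law $P_L$ on $\{1,\dots,\bar L\}$, measurable $g_\nu:\{1,\dots,L\}\times\mathbb R^L\to[0,\infty)$ (for each $L$) with $\mathbb E_{\chi\sim\mathcal N(0,I_L)}g_\nu(\epsilon,\chi)=1$ for all $L,\epsilon$, and a measurable activation $\sigma:\mathbb R^L\to\mathbb R^L$ for each $L$. Let $k^*,v^*\in\mathbb R^D$ with $\|k^*\|^2=\|v^*\|^2=D$ and $(k^* )^\top v^*=0$. Generate $(L,\epsilon^*,X,y)$ by: $L\sim P_L$; $\epsilon^*\sim\mathrm{Unif}(\{1,\dots,L\})$; $X\in\mathbb R^{L\times D}$ with density $g_\nu(\epsilon^*,\frac1{\sqrt D}xk^* )\prod_{\ell=1}^L\mathcal N(x_\ell;0,I_D)$; $y=\frac1{\sqrt D}X_{\epsilon^*}v^*$. For $k,v\in\mathbb R^D$ let $f_{\sigma,k,v}(X)=\sigma(\frac1{\sqrt D}Xk)^\top\frac1{\sqrt D}Xv$ and $\mathcal E_\sigma(k,v)=\mathbb E[(y-f_{\sigma,k,v}(X))^2]$. Let $(k,v)$ satisfy $k^\top v^*=v^\top k^*=k^\top v=0$, and set $m_{kk^*}=\frac1Dk^\top k^*$, $m_{vv^*}=\frac1Dv^\top v^*$, $R_{kk}=\sqrt{\frac1Dk^\top k-m_{kk^*}^2}$, $R_{vv}=\sqrt{\frac1Dv^\top v-m_{vv^*}^2}$. Assuming the expectations below are finite, $$\mathcal E_\sigma(k,v)=\mathbb E_L\,\mathbb E_{\epsilon,\chi,\xi}\,g_\nu(\epsilon,\chi)\Big[1-2m_{vv^*}\sigma(m_{kk^*}\chi+R_{kk}\xi)_\epsilon+(m_{vv^*}^2+R_{vv}^2)\,\sigma(m_{kk^*}\chi+R_{kk}\xi)^\top\sigma(m_{kk^*}\chi+R_{kk}\xi)\Big],$$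 where $L\sim P_L$ and, conditionally on $L$, $\epsilon\sim\mathrm{Unif}(\{1,\dots,L\})$, $\chi\sim\mathcal N(0,I_L)$, $\xi\sim\mathcal N(0,I_L)$ are independent.
   Context: $\mathcal N(x;\omega,V)$ is the Gaussian density. Note $R_{kk},R_{vv}$ are well defined since $\frac1Dk^\top k\ge m_{kk^*}^2$ by Cauchy–Schwarz when $\|k^*\|^2=D$. *)

theory Defs
  imports "HOL-Probability.Probability"
begin

definition std_gauss :: "real measure" where
  "std_gauss = density lborel (\<lambda>x. ennreal (std_normal_density x))"

text \<open>N(0, I_n) on R^n; vectors in R^n are functions nat => real indexed by {..<n}
  (extensional, i.e. undefined outside {..<n}).\<close>
definition gauss_vec :: "nat \<Rightarrow> (nat \<Rightarrow> real) measure" where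
  "gauss_vec n = PiM {..<n} (\<lambda>_. std_gauss)"

definition gauss_mat :: "nat \<Rightarrow> nat \<Rightarrow> (nat \<Rightarrow> nat \<Rightarrow> real) measure" where
  "gauss_mat L D = PiM {..<L} (\<lambda>_. gauss_vec D)"

definition borel_vec :: "nat \<Rightarrow> (nat \<Rightarrow> real) measure" where
  "borel_vec n = PiM {..<n} (\<lambda>_. borel)"

definition vec :: "nat \<Rightarrow> (nat \<Rightarrow> real) \<Rightarrow> (nat \<Rightarrow> real)" where
  "vec n f = restrict f {..<n}"

definition dotp :: "nat \<Rightarrow> (nat \<Rightarrow> real) \<Rightarrow> (nat \<Rightarrow> real) \<Rightarrow> real" where
  "dotp D a b = (\<Sum>d<D. a d * b d)"

definition proj :: "nat \<Rightarrow> nat \<Rightarrow> (nat \<Rightarrow> nat \<Rightarrow> real) \<Rightarrow> (nat \<Rightarrow> real) \<Rightarrow> (nat \<Rightarrow> real)" where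
  "proj L D X w = vec L (\<lambda>l. dotp D (X l) w / sqrt (real D))"

definition model_out :: "(nat \<Rightarrow> (nat \<Rightarrow> real) \<Rightarrow> (nat \<Rightarrow> real)) \<Rightarrow> nat \<Rightarrow> nat
    \<Rightarrow> (nat \<Rightarrow> real) \<Rightarrow> (nat \<Rightarrow> real) \<Rightarrow> (nat \<Rightarrow> nat \<Rightarrow> real) \<Rightarrow> real" where
  "model_out \<sigma> L D k v X = (\<Sum>l<L. \<sigma> L (proj L D X k) l * proj L D X v l)"

definition data_X :: "(nat \<Rightarrow> nat \<Rightarrow> (nat \<Rightarrow> real) \<Rightarrow> real) \<Rightarrow> nat \<Rightarrow> nat \<Rightarrow> (nat \<Rightarrow> real)
    \<Rightarrow> nat \<Rightarrow> (nat \<Rightarrow> nat \<Rightarrow> real) measure" where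
  "data_X g L D ks eps = density (gauss_mat L D) (\<lambda>X. ennreal (g L eps (proj L D X ks)))"

definition risk :: "nat pmf \<Rightarrow> (nat \<Rightarrow> nat \<Rightarrow> (nat \<Rightarrow> real) \<Rightarrow> real)
    \<Rightarrow> (nat \<Rightarrow> (nat \<Rightarrow> real) \<Rightarrow> (nat \<Rightarrow> real)) \<Rightarrow> nat
    \<Rightarrow> (nat \<Rightarrow> real) \<Rightarrow> (nat \<Rightarrow> real) \<Rightarrow> (nat \<Rightarrow> real) \<Rightarrow> (nat \<Rightarrow> real) \<Rightarrow> real" where
  "risk PL g \<sigma> D ks vs k v =
     measure_pmf.expectation PL (\<lambda>L.
       measure_pmf.expectation (pmf_of_set {..<L}) (\<lambda>eps.
         \<integral>X. (proj L D X vs eps - model_out \<sigma> L D k v X)\<^sup>2 \<partial>data_X g L D ks eps))"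

end

theory Submission
  imports Defs
begin

text \<open>
  Split \<open>k = m_kk k* + k\<^sub>\<bottom>\<close> and \<open>v = m_vv v* + v\<^sub>\<bottom>\<close> orthogonally. Then \<open>k*\<close>, \<open>k\<^sub>\<bottom> / R_kk\<close>, \<open>v*\<close>,
  \<open>v\<^sub>\<bottom> / R_vv\<close>, divided by \<open>sqrt D\<close>, are orthonormal, and the risk depends on each row of \<open>X\<close>
  only through its four coordinates in this frame. Under the Gaussian reference measure these
  \<open>4 L\<close> coordinates are again i.i.d. standard normal, because a linear map with orthonormal rows
  pushes the standard Gaussian forward to the standard Gaussian; this is proved by reducing the
  rows to coordinate vectors with Givens rotations, each of which preserves the Gaussian since a
  plane rotation is a product of three shears. Call the coordinates along \<open>k*\<close> and \<open>k\<^sub>\<bottom>\<close>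
  \<open>\<chi>\<close> and \<open>\<xi>\<close>. For fixed \<open>\<chi>, \<xi>\<close> the residual \<open>y - f(X)\<close> is a linear form in the
  coordinates along \<open>v*\<close> and \<open>v\<^sub>\<bottom>\<close>, whose second moment is the squared norm of its coefficient
  vector: this is the bracket in the theorem. When \<open>R_kk = 0\<close> or \<open>R_vv = 0\<close>, the rows are
  padded with two extra independent Gaussian coordinates that supply the missing frame vectors.
\<close>

section \<open>Rotation invariance of the planar standard Gaussian\<close>

lemma prob_space_std_gauss: "prob_space std_gauss"
  unfolding std_gauss_def by (rule prob_space_normal_density) simp

lemma sets_std_gauss [measurable_cong, simp]: "sets std_gauss = sets borel"
  by (simp add: std_gauss_def)

lemma space_std_gauss [simp]: "space std_gauss = UNIV"
  by (simp add: std_gauss_def)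

lemma nn_integral_std_gauss:
  fixes f :: "real \<Rightarrow> ennreal"
  assumes [measurable]: "f \<in> borel_measurable borel"
  shows "(\<integral>\<^sup>+x. f x \<partial>std_gauss) = (\<integral>\<^sup>+x. std_normal_density x * f x \<partial>lborel)"
  unfolding std_gauss_def by (subst nn_integral_density) auto

lemma nn_integral_lborel_translate:
  fixes f :: "real \<Rightarrow> ennreal"
  assumes "f \<in> borel_measurable borel"
  shows "(\<integral>\<^sup>+x. f (x + a) \<partial>lborel) = (\<integral>\<^sup>+x. f x \<partial>lborel)"
  using nn_integral_real_affine[OF assms, of 1 a] by (simp add: add.commute)

lemma nn_integral_lborel_shear_snd:
  fixes h :: "real \<Rightarrow> real \<Rightarrow> ennreal"
  assumes [measurable]: "case_prod h \<in> borel_measurable (borel \<Otimes>\<^sub>M borel)"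
  shows "(\<integral>\<^sup>+x. \<integral>\<^sup>+y. h x (y + b * x) \<partial>lborel \<partial>lborel) = (\<integral>\<^sup>+x. \<integral>\<^sup>+y. h x y \<partial>lborel \<partial>lborel)"
  by (intro nn_integral_cong nn_integral_lborel_translate) measurable

lemma nn_integral_lborel_shear_fst:
  fixes h :: "real \<Rightarrow> real \<Rightarrow> ennreal"
  assumes [measurable]: "case_prod h \<in> borel_measurable (borel \<Otimes>\<^sub>M borel)"
  shows "(\<integral>\<^sup>+x. \<integral>\<^sup>+y. h (x + a * y) y \<partial>lborel \<partial>lborel) = (\<integral>\<^sup>+x. \<integral>\<^sup>+y. h x y \<partial>lborel \<partial>lborel)"
proof -
  have "(\<integral>\<^sup>+x. \<integral>\<^sup>+y. h (x + a * y) y \<partial>lborel \<partial>lborel) = (\<integral>\<^sup>+y. \<integral>\<^sup>+x. h (x + a * y) y \<partial>lborel \<partial>lborel)"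
    by (rule lborel_pair.Fubini'[symmetric]) measurable
  also have "\<dots> = (\<integral>\<^sup>+y. \<integral>\<^sup>+x. h x y \<partial>lborel \<partial>lborel)"
    by (intro nn_integral_cong nn_integral_lborel_translate) measurable
  also have "\<dots> = (\<integral>\<^sup>+x. \<integral>\<^sup>+y. h x y \<partial>lborel \<partial>lborel)"
    by (rule lborel_pair.Fubini') measurable
  finally show ?thesis .
qed

text \<open>A rotation with \<open>cs \<noteq> -1\<close> is the product of three shears with parameters
  \<open>-t, sn, -t\<close>, where \<open>t = sn / (1 + cs)\<close> is the tangent of the half angle.\<close>
lemma nn_integral_lborel_rotation_aux:
  fixes h :: "real \<Rightarrow> real \<Rightarrow> ennreal"
  assumes cs: "cs\<^sup>2 + sn\<^sup>2 = 1" "cs \<noteq> -1"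
    and [measurable]: "case_prod h \<in> borel_measurable (borel \<Otimes>\<^sub>M borel)"
  shows "(\<integral>\<^sup>+x. \<integral>\<^sup>+y. h (cs * x - sn * y) (sn * x + cs * y) \<partial>lborel \<partial>lborel)
       = (\<integral>\<^sup>+x. \<integral>\<^sup>+y. h x y \<partial>lborel \<partial>lborel)"
proof -
  define t where "t = sn / (1 + cs)"
  have "1 + cs \<noteq> 0" using cs by auto
  then have t_sn: "1 - t * sn = cs" and t_cs: "t * (1 + cs) = sn"
    using cs by (auto simp: t_def field_simps power2_eq_square)
  define h1 where "h1 u w = h (u + (- t) * w) w" for u w
  define h2 where "h2 u w = h1 u (w + sn * u)" for u w
  have [measurable]: "case_prod h1 \<in> borel_measurable (borel \<Otimes>\<^sub>M borel)"
    "case_prod h2 \<in> borel_measurable (borel \<Otimes>\<^sub>M borel)"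
    unfolding h1_def h2_def by measurable
  have rot: "h (cs * x - sn * y) (sn * x + cs * y) = h2 (x + (- t) * y) y" for x y
  proof -
    have "(x - t * y) - t * (y + sn * (x - t * y)) = x * (1 - t * sn) - y * (t * (1 + (1 - t * sn)))"
      "y + sn * (x - t * y) = sn * x + (1 - t * sn) * y"
      by (simp_all add: algebra_simps)
    then have "(x - t * y) - t * (y + sn * (x - t * y)) = cs * x - sn * y"
      "y + sn * (x - t * y) = sn * x + cs * y"
      by (simp_all only: t_sn t_cs) (simp_all add: mult.commute)
    then show ?thesis
      by (simp add: h1_def h2_def)
  qed
  have "(\<integral>\<^sup>+x. \<integral>\<^sup>+y. h (cs * x - sn * y) (sn * x + cs * y) \<partial>lborel \<partial>lborel)
      = (\<integral>\<^sup>+x. \<integral>\<^sup>+y. h2 (x + (- t) * y) y \<partial>lborel \<partial>lborel)"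
    by (simp add: rot)
  also have "\<dots> = (\<integral>\<^sup>+x. \<integral>\<^sup>+y. h1 x (y + sn * x) \<partial>lborel \<partial>lborel)"
    unfolding h2_def[symmetric] by (rule nn_integral_lborel_shear_fst) measurable
  also have "\<dots> = (\<integral>\<^sup>+x. \<integral>\<^sup>+y. h (x + (- t) * y) y \<partial>lborel \<partial>lborel)"
    unfolding h1_def[symmetric] by (rule nn_integral_lborel_shear_snd) measurable
  also have "\<dots> = (\<integral>\<^sup>+x. \<integral>\<^sup>+y. h x y \<partial>lborel \<partial>lborel)"
    by (rule nn_integral_lborel_shear_fst) measurable
  finally show ?thesis .
qed

lemma nn_integral_lborel_rotation:
  fixes h :: "real \<Rightarrow> real \<Rightarrow> ennreal"
  assumes cs: "cs\<^sup>2 + sn\<^sup>2 = 1"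
    and [measurable]: "case_prod h \<in> borel_measurable (borel \<Otimes>\<^sub>M borel)"
  shows "(\<integral>\<^sup>+x. \<integral>\<^sup>+y. h (cs * x - sn * y) (sn * x + cs * y) \<partial>lborel \<partial>lborel)
       = (\<integral>\<^sup>+x. \<integral>\<^sup>+y. h x y \<partial>lborel \<partial>lborel)"
proof (cases "cs = -1")
  case False
  with cs show ?thesis by (rule nn_integral_lborel_rotation_aux) fact
next
  case True
  \<comment> \<open>the half turn is the square of the quarter turn\<close>
  then have "sn = 0" using cs by (simp add: power2_eq_square)
  define h' where "h' u w = h (- w) u" for u w
  have [measurable]: "case_prod h' \<in> borel_measurable (borel \<Otimes>\<^sub>M borel)"
    unfolding h'_def by measurable
  have "(\<integral>\<^sup>+x. \<integral>\<^sup>+y. h (cs * x - sn * y) (sn * x + cs * y) \<partial>lborel \<partial>lborel)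
      = (\<integral>\<^sup>+x. \<integral>\<^sup>+y. h' (0 * x - 1 * y) (1 * x + 0 * y) \<partial>lborel \<partial>lborel)"
    by (simp add: h'_def True \<open>sn = 0\<close>)
  also have "\<dots> = (\<integral>\<^sup>+x. \<integral>\<^sup>+y. h' x y \<partial>lborel \<partial>lborel)"
    by (rule nn_integral_lborel_rotation_aux) auto
  also have "\<dots> = (\<integral>\<^sup>+x. \<integral>\<^sup>+y. h (0 * x - 1 * y) (1 * x + 0 * y) \<partial>lborel \<partial>lborel)"
    by (simp add: h'_def)
  also have "\<dots> = (\<integral>\<^sup>+x. \<integral>\<^sup>+y. h x y \<partial>lborel \<partial>lborel)"
    by (rule nn_integral_lborel_rotation_aux) auto
  finally show ?thesis .
qed

lemma std_normal_density_mult_rotation: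
  assumes "cs\<^sup>2 + sn\<^sup>2 = 1"
  shows "std_normal_density (cs * x - sn * y) * std_normal_density (sn * x + cs * y)
       = std_normal_density x * std_normal_density y"
proof -
  have "(cs * x - sn * y)\<^sup>2 + (sn * x + cs * y)\<^sup>2 = (cs\<^sup>2 + sn\<^sup>2) * (x\<^sup>2 + y\<^sup>2)"
    by algebra
  then have norm: "(cs * x - sn * y)\<^sup>2 + (sn * x + cs * y)\<^sup>2 = x\<^sup>2 + y\<^sup>2"
    using assms by simp
  have "std_normal_density a * std_normal_density b = (1 / sqrt (2 * pi))\<^sup>2 * exp (- (a\<^sup>2 + b\<^sup>2) / 2)"
    for a b by (simp add: std_normal_density_def power2_eq_square exp_add[symmetric] field_simps)
  then show ?thesis by (simp only: norm)
qed

lemma nn_integral_std_gauss_iterated: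
  fixes f :: "real \<Rightarrow> real \<Rightarrow> ennreal"
  assumes [measurable]: "case_prod f \<in> borel_measurable (borel \<Otimes>\<^sub>M borel)"
  shows "(\<integral>\<^sup>+x. \<integral>\<^sup>+y. f x y \<partial>std_gauss \<partial>std_gauss)
       = (\<integral>\<^sup>+x. \<integral>\<^sup>+y. ennreal (std_normal_density x * std_normal_density y) * f x y \<partial>lborel \<partial>lborel)"
  by (subst nn_integral_std_gauss, measurable)
     (auto simp: nn_integral_std_gauss nn_integral_cmult[symmetric] ennreal_mult mult.assoc
           intro!: nn_integral_cong)

lemma nn_integral_std_gauss_rotation:
  fixes f :: "real \<Rightarrow> real \<Rightarrow> ennreal"
  assumes cs: "cs\<^sup>2 + sn\<^sup>2 = 1"
    and [measurable]: "case_prod f \<in> borel_measurable (borel \<Otimes>\<^sub>M borel)"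
  shows "(\<integral>\<^sup>+x. \<integral>\<^sup>+y. f (cs * x - sn * y) (sn * x + cs * y) \<partial>std_gauss \<partial>std_gauss)
       = (\<integral>\<^sup>+x. \<integral>\<^sup>+y. f x y \<partial>std_gauss \<partial>std_gauss)"
proof -
  define h where "h x y = ennreal (std_normal_density x * std_normal_density y) * f x y" for x y
  have [measurable]: "case_prod h \<in> borel_measurable (borel \<Otimes>\<^sub>M borel)"
    unfolding h_def by measurable
  have "(\<integral>\<^sup>+x. \<integral>\<^sup>+y. f (cs * x - sn * y) (sn * x + cs * y) \<partial>std_gauss \<partial>std_gauss)
      = (\<integral>\<^sup>+x. \<integral>\<^sup>+y. h (cs * x - sn * y) (sn * x + cs * y) \<partial>lborel \<partial>lborel)"
    by (subst nn_integral_std_gauss_iterated)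
       (measurable, simp add: h_def std_normal_density_mult_rotation[OF cs])
  also have "\<dots> = (\<integral>\<^sup>+x. \<integral>\<^sup>+y. h x y \<partial>lborel \<partial>lborel)"
    using cs by (rule nn_integral_lborel_rotation) measurable
  also have "\<dots> = (\<integral>\<^sup>+x. \<integral>\<^sup>+y. f x y \<partial>std_gauss \<partial>std_gauss)"
    unfolding h_def by (rule nn_integral_std_gauss_iterated[symmetric]) measurable
  finally show ?thesis .
qed

lemma nn_integral_std_gauss_uminus:
  fixes f :: "real \<Rightarrow> ennreal"
  assumes [measurable]: "f \<in> borel_measurable borel"
  shows "(\<integral>\<^sup>+x. f (- x) \<partial>std_gauss) = (\<integral>\<^sup>+x. f x \<partial>std_gauss)"
proof -
  have m: "(\<lambda>x. ennreal (std_normal_density x) * f x) \<in> borel_measurable borel"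
    by measurable
  show ?thesis
    using nn_integral_real_affine[OF m, of "-1" 0]
    by (simp add: nn_integral_std_gauss std_normal_density_def)
qed

lemma nn_integral_std_gauss_square: "(\<integral>\<^sup>+t. ennreal (t\<^sup>2) \<partial>std_gauss) = 1"
proof -
  have "std_gauss = std_normal_distribution"
    by (simp add: std_gauss_def)
  then have "integrable std_gauss (\<lambda>t. t\<^sup>2)" "(\<integral>t. t\<^sup>2 \<partial>std_gauss) = 1"
    using std_normal_distribution_even_moments[of 1] by simp_all
  then show ?thesis
    by (simp add: nn_integral_eq_integral)
qed

section \<open>The standard Gaussian on \<open>\<real>\<^sup>I\<close>\<close>

definition std_gauss_on :: "'i set \<Rightarrow> ('i \<Rightarrow> real) measure" where
  "std_gauss_on I = PiM I (\<lambda>_. std_gauss)"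

lemma product_prob_space_std_gauss: "product_prob_space (\<lambda>_. std_gauss)"
  by (rule product_prob_spaceI) (rule prob_space_std_gauss)

interpretation std_gauss_product: product_sigma_finite "\<lambda>_. std_gauss"
  by (simp add: product_sigma_finite_def prob_space_imp_sigma_finite prob_space_std_gauss)

lemma prob_space_std_gauss_on: "prob_space (std_gauss_on I)"
  unfolding std_gauss_on_def by (rule prob_space_PiM) (rule prob_space_std_gauss)

lemma sets_std_gauss_on [measurable_cong]: "sets (std_gauss_on I) = sets (PiM I (\<lambda>_. borel))"
  unfolding std_gauss_on_def by (rule sets_PiM_cong) auto

lemma space_std_gauss_on: "space (std_gauss_on I) = (\<Pi>\<^sub>E i\<in>I. UNIV)"
  by (simp add: std_gauss_on_def space_PiM)

lemma nn_integral_std_gauss_on_insert: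
  assumes "finite I" "i \<notin> I" and "f \<in> borel_measurable (std_gauss_on (insert i I))"
  shows "(\<integral>\<^sup>+x. f x \<partial>std_gauss_on (insert i I)) = (\<integral>\<^sup>+x. \<integral>\<^sup>+a. f (x(i := a)) \<partial>std_gauss \<partial>std_gauss_on I)"
  using assms unfolding std_gauss_on_def by (rule std_gauss_product.product_nn_integral_insert)

lemma measurable_std_gauss_on_update2:
  assumes "z \<in> space (std_gauss_on I)" "p \<notin> I" "q \<notin> I" "p \<noteq> q"
  shows "(\<lambda>(a, b). z(q := b, p := a)) \<in> measurable (borel \<Otimes>\<^sub>M borel) (std_gauss_on (insert p (insert q I)))"
proof -
  have "(\<lambda>b. z(q := b)) \<in> measurable borel (std_gauss_on (insert q I))"
    using measurable_component_update[of z I "\<lambda>_. std_gauss" q] assms by (simp add: std_gauss_on_def)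
  then show ?thesis using assms unfolding std_gauss_on_def by measurable
qed

lemma nn_integral_std_gauss_on_insert2:
  assumes "finite I" "p \<notin> I" "q \<notin> I" "p \<noteq> q"
    and [measurable]: "f \<in> borel_measurable (std_gauss_on (insert p (insert q I)))"
  shows "(\<integral>\<^sup>+x. f x \<partial>std_gauss_on (insert p (insert q I)))
       = (\<integral>\<^sup>+z. \<integral>\<^sup>+b. \<integral>\<^sup>+a. f (z(q := b, p := a)) \<partial>std_gauss \<partial>std_gauss \<partial>std_gauss_on I)"
  using assms
  by (simp add: nn_integral_std_gauss_on_insert[of "insert q I" p]
                nn_integral_std_gauss_on_insert[of I q])

definition givens :: "'i \<Rightarrow> 'i \<Rightarrow> real \<Rightarrow> real \<Rightarrow> ('i \<Rightarrow> real) \<Rightarrow> 'i \<Rightarrow> real" where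
  "givens p q cs sn x = x(p := cs * x p - sn * x q, q := sn * x p + cs * x q)"

definition reflect :: "'i \<Rightarrow> ('i \<Rightarrow> real) \<Rightarrow> 'i \<Rightarrow> real" where
  "reflect p x = x(p := - x p)"

lemma measurable_givens:
  assumes "p \<in> I" "q \<in> I"
  shows "givens p q cs sn \<in> measurable (std_gauss_on I) (std_gauss_on I)"
proof -
  have "givens p q cs sn = (\<lambda>x i. if i = q then sn * x p + cs * x q else if i = p then cs * x p - sn * x q else x i)"
    by (auto simp: givens_def fun_eq_iff)
  then show ?thesis unfolding std_gauss_on_def
    by (intro measurable_PiM_single') (use assms in \<open>auto simp: space_PiM PiE_iff extensional_def\<close>)
qed

lemma measurable_reflect:
  assumes "p \<in> I"
  shows "reflect p \<in> measurable (std_gauss_on I) (std_gauss_on I)"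
proof -
  have "reflect p = (\<lambda>x i. if i = p then - x p else x i)"
    by (auto simp: reflect_def fun_eq_iff)
  then show ?thesis unfolding std_gauss_on_def
    by (intro measurable_PiM_single') (use assms in \<open>auto simp: space_PiM PiE_iff extensional_def\<close>)
qed

lemma nn_integral_std_gauss_givens_plane:
  assumes "p \<noteq> q" "cs\<^sup>2 + sn\<^sup>2 = 1"
    and [measurable]: "(\<lambda>(a, b). f (z(q := b, p := a))) \<in> borel_measurable (borel \<Otimes>\<^sub>M borel)"
  shows "(\<integral>\<^sup>+b. \<integral>\<^sup>+a. f (givens p q cs sn (z(q := b, p := a))) \<partial>std_gauss \<partial>std_gauss)
       = (\<integral>\<^sup>+b. \<integral>\<^sup>+a. f (z(q := b, p := a)) \<partial>std_gauss \<partial>std_gauss)"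
proof -
  interpret pair_sigma_finite std_gauss std_gauss
    by (simp add: pair_sigma_finite.intro prob_space_imp_sigma_finite prob_space_std_gauss)
  define h where "h a b = f (z(q := b, p := a))" for a b
  have [measurable]: "case_prod h \<in> borel_measurable (borel \<Otimes>\<^sub>M borel)"
    unfolding h_def by measurable
  have "givens p q cs sn (z(q := b, p := a)) = z(q := sn * a + cs * b, p := cs * a - sn * b)" for a b
    using assms(1) by (auto simp: givens_def fun_eq_iff)
  then have "(\<integral>\<^sup>+b. \<integral>\<^sup>+a. f (givens p q cs sn (z(q := b, p := a))) \<partial>std_gauss \<partial>std_gauss)
      = (\<integral>\<^sup>+b. \<integral>\<^sup>+a. h (cs * a - sn * b) (sn * a + cs * b) \<partial>std_gauss \<partial>std_gauss)"
    by (simp add: h_def)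
  also have "\<dots> = (\<integral>\<^sup>+a. \<integral>\<^sup>+b. h (cs * a - sn * b) (sn * a + cs * b) \<partial>std_gauss \<partial>std_gauss)"
    by (rule Fubini') measurable
  also have "\<dots> = (\<integral>\<^sup>+a. \<integral>\<^sup>+b. h a b \<partial>std_gauss \<partial>std_gauss)"
    using assms(2) by (rule nn_integral_std_gauss_rotation) measurable
  also have "\<dots> = (\<integral>\<^sup>+b. \<integral>\<^sup>+a. h a b \<partial>std_gauss \<partial>std_gauss)"
    by (rule Fubini'[symmetric]) measurable
  finally show ?thesis by (simp add: h_def)
qed

lemma nn_integral_std_gauss_on_givens:
  assumes I: "finite I" "p \<in> I" "q \<in> I" "p \<noteq> q" and cs: "cs\<^sup>2 + sn\<^sup>2 = 1"
    and f[measurable]: "f \<in> borel_measurable (std_gauss_on I)"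
  shows "(\<integral>\<^sup>+x. f (givens p q cs sn x) \<partial>std_gauss_on I) = (\<integral>\<^sup>+x. f x \<partial>std_gauss_on I)"
proof -
  define I' where "I' = I - {p, q}"
  have I_eq: "I = insert p (insert q I')" and I': "finite I'" "p \<notin> I'" "q \<notin> I'"
    using I by (auto simp: I'_def)
  have split: "(\<integral>\<^sup>+x. F x \<partial>std_gauss_on I)
      = (\<integral>\<^sup>+z. \<integral>\<^sup>+b. \<integral>\<^sup>+a. F (z(q := b, p := a)) \<partial>std_gauss \<partial>std_gauss \<partial>std_gauss_on I')"
    if "F \<in> borel_measurable (std_gauss_on I)" for F
    using nn_integral_std_gauss_on_insert2[OF I' I(4) that[unfolded I_eq]] by (simp only: I_eq)
  have plane: "(\<integral>\<^sup>+b. \<integral>\<^sup>+a. f (givens p q cs sn (z(q := b, p := a))) \<partial>std_gauss \<partial>std_gauss)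
      = (\<integral>\<^sup>+b. \<integral>\<^sup>+a. f (z(q := b, p := a)) \<partial>std_gauss \<partial>std_gauss)"
    if z: "z \<in> space (std_gauss_on I')" for z
  proof (rule nn_integral_std_gauss_givens_plane[OF I(4) cs])
    have "(\<lambda>(a, b). z(q := b, p := a)) \<in> measurable (borel \<Otimes>\<^sub>M borel) (std_gauss_on I)"
      using measurable_std_gauss_on_update2[OF z I'(2,3) I(4)] by (simp only: I_eq)
    then show "(\<lambda>(a, b). f (z(q := b, p := a))) \<in> borel_measurable (borel \<Otimes>\<^sub>M borel)"
      by measurable
  qed
  have [measurable]: "(\<lambda>x. f (givens p q cs sn x)) \<in> borel_measurable (std_gauss_on I)"
    using measurable_givens[OF I(2,3)] by measurable
  have "(\<integral>\<^sup>+x. f (givens p q cs sn x) \<partial>std_gauss_on I)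
      = (\<integral>\<^sup>+z. \<integral>\<^sup>+b. \<integral>\<^sup>+a. f (givens p q cs sn (z(q := b, p := a))) \<partial>std_gauss \<partial>std_gauss \<partial>std_gauss_on I')"
    by (rule split) measurable
  also have "\<dots> = (\<integral>\<^sup>+z. \<integral>\<^sup>+b. \<integral>\<^sup>+a. f (z(q := b, p := a)) \<partial>std_gauss \<partial>std_gauss \<partial>std_gauss_on I')"
    by (intro nn_integral_cong plane)
  also have "\<dots> = (\<integral>\<^sup>+x. f x \<partial>std_gauss_on I)"
    by (intro split[symmetric] f)
  finally show ?thesis .
qed

lemma nn_integral_std_gauss_on_reflect:
  assumes I: "finite I" "p \<in> I" and f[measurable]: "f \<in> borel_measurable (std_gauss_on I)"
  shows "(\<integral>\<^sup>+x. f (reflect p x) \<partial>std_gauss_on I) = (\<integral>\<^sup>+x. f x \<partial>std_gauss_on I)"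
proof -
  define I' where "I' = I - {p}"
  have I_eq: "I = insert p I'" and I': "finite I'" "p \<notin> I'"
    using I by (auto simp: I'_def)
  have split: "(\<integral>\<^sup>+x. F x \<partial>std_gauss_on I) = (\<integral>\<^sup>+z. \<integral>\<^sup>+a. F (z(p := a)) \<partial>std_gauss \<partial>std_gauss_on I')"
    if "F \<in> borel_measurable (std_gauss_on I)" for F
    using nn_integral_std_gauss_on_insert[OF I' that[unfolded I_eq]] by (simp only: I_eq)
  have line: "(\<integral>\<^sup>+a. f (reflect p (z(p := a))) \<partial>std_gauss) = (\<integral>\<^sup>+a. f (z(p := a)) \<partial>std_gauss)"
    if z: "z \<in> space (std_gauss_on I')" for z
  proof -
    have "(\<lambda>a. z(p := a)) \<in> measurable borel (std_gauss_on I)"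
      using measurable_component_update[of z I' "\<lambda>_. std_gauss" p] z I'
      by (simp add: std_gauss_on_def I_eq)
    then have [measurable]: "(\<lambda>a. f (z(p := a))) \<in> borel_measurable borel"
      by measurable
    show ?thesis
      by (simp add: reflect_def nn_integral_std_gauss_uminus[where f = "\<lambda>a. f (z(p := a))"])
  qed
  have [measurable]: "(\<lambda>x. f (reflect p x)) \<in> borel_measurable (std_gauss_on I)"
    using measurable_reflect[OF I(2)] by measurable
  have "(\<integral>\<^sup>+x. f (reflect p x) \<partial>std_gauss_on I)
      = (\<integral>\<^sup>+z. \<integral>\<^sup>+a. f (reflect p (z(p := a))) \<partial>std_gauss \<partial>std_gauss_on I')"
    by (rule split) measurable
  also have "\<dots> = (\<integral>\<^sup>+z. \<integral>\<^sup>+a. f (z(p := a)) \<partial>std_gauss \<partial>std_gauss_on I')"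
    by (intro nn_integral_cong line)
  also have "\<dots> = (\<integral>\<^sup>+x. f x \<partial>std_gauss_on I)"
    by (intro split[symmetric] f)
  finally show ?thesis .
qed

lemma nn_integral_std_gauss_on_reindex:
  assumes "inj_on \<pi> J" "\<pi> ` J \<subseteq> I" and [measurable]: "f \<in> borel_measurable (std_gauss_on J)"
  shows "(\<integral>\<^sup>+x. f (\<lambda>j\<in>J. x (\<pi> j)) \<partial>std_gauss_on I) = (\<integral>\<^sup>+y. f y \<partial>std_gauss_on J)"
proof -
  have "distr (std_gauss_on I) (std_gauss_on J) (\<lambda>x. \<lambda>j\<in>J. x (\<pi> j)) = std_gauss_on J"
    using distr_PiM_reindex[of I "\<lambda>_. std_gauss" \<pi> J] assms(1,2) prob_space_std_gauss
    by (auto simp: std_gauss_on_def)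
  moreover have "(\<lambda>x. \<lambda>j\<in>J. x (\<pi> j)) \<in> measurable (std_gauss_on I) (std_gauss_on J)"
    unfolding std_gauss_on_def by measurable (use assms(2) in blast)
  ultimately show ?thesis
    by (metis assms(3) nn_integral_distr)
qed

lemma nn_integral_std_gauss_on_Un:
  assumes "I \<inter> J = {}" "finite I" "finite J" and "f \<in> borel_measurable (std_gauss_on (I \<union> J))"
  shows "(\<integral>\<^sup>+x. f x \<partial>std_gauss_on (I \<union> J))
       = (\<integral>\<^sup>+x. \<integral>\<^sup>+y. f (merge I J (x, y)) \<partial>std_gauss_on J \<partial>std_gauss_on I)"
  using assms unfolding std_gauss_on_def by (rule std_gauss_product.product_nn_integral_fold)

lemma nn_integral_std_gauss_on_restrict:
  assumes "finite K" "J \<subseteq> K" and [measurable]: "f \<in> borel_measurable (std_gauss_on J)"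
  shows "(\<integral>\<^sup>+x. f (restrict x J) \<partial>std_gauss_on K) = (\<integral>\<^sup>+x. f x \<partial>std_gauss_on J)"
proof -
  have "distr (std_gauss_on K) (std_gauss_on J) (\<lambda>x. restrict x J) = std_gauss_on J"
    unfolding std_gauss_on_def using assms(1,2) finite_subset
    by (intro product_prob_space.distr_PiM_restrict_finite[OF product_prob_space_std_gauss]) auto
  moreover have "(\<lambda>x. restrict x J) \<in> measurable (std_gauss_on K) (std_gauss_on J)"
    unfolding std_gauss_on_def by (rule measurable_restrict_subset) fact
  ultimately show ?thesis
    by (metis assms(3) nn_integral_distr)
qed

lemma measurable_PiM_component_component:
  assumes "a \<in> A" "b \<in> B"
  shows "(\<lambda>X. X a b) \<in> measurable (PiM A (\<lambda>a. PiM B (M a))) (M a b)"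
  using measurable_compose[OF measurable_component_singleton[OF assms(1)]
      measurable_component_singleton[OF assms(2)]] .

lemma measurable_std_gauss_on_curry:
  "(\<lambda>X. \<lambda>p\<in>A \<times> B. X (fst p) (snd p)) \<in> measurable (PiM A (\<lambda>_. std_gauss_on B)) (std_gauss_on (A \<times> B))"
  unfolding std_gauss_on_def
  by (intro measurable_restrict) (auto intro: measurable_PiM_component_component)

lemma distr_PiM_std_gauss_on_curry:
  assumes "finite A" "finite B"
  shows "distr (PiM A (\<lambda>_. std_gauss_on B)) (std_gauss_on (A \<times> B)) (\<lambda>X. \<lambda>p\<in>A \<times> B. X (fst p) (snd p))
       = std_gauss_on (A \<times> B)"
  unfolding std_gauss_on_def[of "A \<times> B"]
proof (rule std_gauss_product.PiM_eqI)
  fix C assume C: "\<And>i. i \<in> A \<times> B \<Longrightarrow> C i \<in> sets std_gauss"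
  have CB: "Pi\<^sub>E B (\<lambda>b. C (a, b)) \<in> sets (std_gauss_on B)" if "a \<in> A" for a
    unfolding std_gauss_on_def using C that assms by (intro sets_PiM_I_finite) auto
  have pre: "(\<lambda>X. \<lambda>p\<in>A \<times> B. X (fst p) (snd p)) -` Pi\<^sub>E (A \<times> B) C \<inter> space (PiM A (\<lambda>_. std_gauss_on B))
      = Pi\<^sub>E A (\<lambda>a. Pi\<^sub>E B (\<lambda>b. C (a, b)))"
    by (auto simp: space_PiM space_std_gauss_on PiE_iff extensional_def)
  have "Pi\<^sub>E (A \<times> B) C \<in> sets (PiM (A \<times> B) (\<lambda>_. std_gauss))"
    using C assms by (intro sets_PiM_I_finite) auto
  from emeasure_distr[OF measurable_std_gauss_on_curry[of A B, unfolded std_gauss_on_def[of "A \<times> B"]] this]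
  have "emeasure (distr (PiM A (\<lambda>_. std_gauss_on B)) (PiM (A \<times> B) (\<lambda>_. std_gauss))
      (\<lambda>X. \<lambda>p\<in>A \<times> B. X (fst p) (snd p))) (Pi\<^sub>E (A \<times> B) C)
      = emeasure (PiM A (\<lambda>_. std_gauss_on B)) (Pi\<^sub>E A (\<lambda>a. Pi\<^sub>E B (\<lambda>b. C (a, b))))"
    by (simp only: pre)
  also have "\<dots> = (\<Prod>a\<in>A. emeasure (std_gauss_on B) (Pi\<^sub>E B (\<lambda>b. C (a, b))))"
    using CB assms(1)
    by (intro product_sigma_finite.emeasure_PiM)
       (auto simp: product_sigma_finite_def prob_space_imp_sigma_finite prob_space_std_gauss_on)
  also have "\<dots> = (\<Prod>a\<in>A. \<Prod>b\<in>B. emeasure std_gauss (C (a, b)))"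
    unfolding std_gauss_on_def using C assms(2)
    by (intro prod.cong refl std_gauss_product.emeasure_PiM) auto
  finally show "emeasure (distr (PiM A (\<lambda>_. std_gauss_on B)) (PiM (A \<times> B) (\<lambda>_. std_gauss))
      (\<lambda>X. \<lambda>p\<in>A \<times> B. X (fst p) (snd p))) (Pi\<^sub>E (A \<times> B) C) = (\<Prod>p\<in>A \<times> B. emeasure std_gauss (C p))"
    by (simp add: prod.cartesian_product)
qed (use assms in auto)

lemma nn_integral_PiM_std_gauss_on:
  assumes "finite A" "finite B" "finite K" "A \<times> B \<subseteq> K"
    and [measurable]: "f \<in> borel_measurable (PiM A (\<lambda>_. std_gauss_on B))"
  shows "(\<integral>\<^sup>+X. f X \<partial>PiM A (\<lambda>_. std_gauss_on B)) = (\<integral>\<^sup>+x. f (\<lambda>a\<in>A. \<lambda>b\<in>B. x (a, b)) \<partial>std_gauss_on K)"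
proof -
  have [measurable]: "(\<lambda>x. \<lambda>a\<in>A. \<lambda>b\<in>B. x (a, b)) \<in> measurable (std_gauss_on (A \<times> B)) (PiM A (\<lambda>_. std_gauss_on B))"
    unfolding std_gauss_on_def by measurable
  note measurable_std_gauss_on_curry[measurable]
  have "(\<integral>\<^sup>+x. f (\<lambda>a\<in>A. \<lambda>b\<in>B. x (a, b)) \<partial>std_gauss_on K)
      = (\<integral>\<^sup>+x. f (\<lambda>a\<in>A. \<lambda>b\<in>B. x (a, b)) \<partial>std_gauss_on (A \<times> B))"
    using nn_integral_std_gauss_on_restrict[OF assms(3,4), of "\<lambda>x. f (\<lambda>a\<in>A. \<lambda>b\<in>B. x (a, b))"]
    by (simp add: cong: restrict_cong)
  also have "\<dots> = (\<integral>\<^sup>+X. f (\<lambda>a\<in>A. \<lambda>b\<in>B. (\<lambda>p\<in>A \<times> B. X (fst p) (snd p)) (a, b)) \<partial>PiM A (\<lambda>_. std_gauss_on B))"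
    by (subst distr_PiM_std_gauss_on_curry[OF assms(1,2), symmetric]) (simp add: nn_integral_distr)
  also have "\<dots> = (\<integral>\<^sup>+X. f X \<partial>PiM A (\<lambda>_. std_gauss_on B))"
    by (intro nn_integral_cong arg_cong[where f = f])
       (auto simp: space_PiM space_std_gauss_on PiE_iff extensional_def fun_eq_iff)
  finally show ?thesis ..
qed

lemma nn_integral_std_gauss_on_Times_doubleton:
  assumes "finite A" "u \<noteq> w"
    and [measurable]: "case_prod h \<in> borel_measurable (std_gauss_on A \<Otimes>\<^sub>M std_gauss_on A)"
  shows "(\<integral>\<^sup>+y. h (\<lambda>a\<in>A. y (a, u)) (\<lambda>a\<in>A. y (a, w)) \<partial>std_gauss_on (A \<times> {u, w}))
       = (\<integral>\<^sup>+(x, z). h x z \<partial>(std_gauss_on A \<Otimes>\<^sub>M std_gauss_on A))"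
proof -
  interpret G: sigma_finite_measure "std_gauss_on A"
    by (simp add: prob_space_imp_sigma_finite prob_space_std_gauss_on)
  have split: "A \<times> {u, w} = A \<times> {u} \<union> A \<times> {w}" "A \<times> {u} \<inter> A \<times> {w} = {}"
    using assms(2) by auto
  have inj: "inj_on (\<lambda>a. (a, v)) A" for v :: 'b
    by (simp add: inj_on_def)
  have "(\<integral>\<^sup>+y. h (\<lambda>a\<in>A. y (a, u)) (\<lambda>a\<in>A. y (a, w)) \<partial>std_gauss_on (A \<times> {u, w}))
      = (\<integral>\<^sup>+y1. \<integral>\<^sup>+y2. h (\<lambda>a\<in>A. y1 (a, u)) (\<lambda>a\<in>A. y2 (a, w))
           \<partial>std_gauss_on (A \<times> {w}) \<partial>std_gauss_on (A \<times> {u}))"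
    unfolding split(1) using split(2) assms(1)
    by (subst nn_integral_std_gauss_on_Un) (auto intro!: nn_integral_cong arg_cong2[where f = h])
  also have "\<dots> = (\<integral>\<^sup>+y1. \<integral>\<^sup>+z. h (\<lambda>a\<in>A. y1 (a, u)) z \<partial>std_gauss_on A \<partial>std_gauss_on (A \<times> {u}))"
    by (intro nn_integral_cong nn_integral_std_gauss_on_reindex inj measurable_Pair2[OF assms(3)])
       (auto simp: space_std_gauss_on)
  also have "\<dots> = (\<integral>\<^sup>+x. \<integral>\<^sup>+z. h x z \<partial>std_gauss_on A \<partial>std_gauss_on A)"
    by (rule nn_integral_std_gauss_on_reindex[OF inj]) auto
  also have "\<dots> = (\<integral>\<^sup>+(x, z). h x z \<partial>(std_gauss_on A \<Otimes>\<^sub>M std_gauss_on A))"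
    using G.nn_integral_fst[where f = "case_prod h"] by simp
  finally show ?thesis .
qed

section \<open>Images under linear maps with orthonormal rows\<close>

definition lin_map :: "'i set \<Rightarrow> 'j set \<Rightarrow> ('j \<Rightarrow> 'i \<Rightarrow> real) \<Rightarrow> ('i \<Rightarrow> real) \<Rightarrow> 'j \<Rightarrow> real" where
  "lin_map I J c x = (\<lambda>j\<in>J. \<Sum>i\<in>I. c j i * x i)"

definition orthonormal_rows :: "'i set \<Rightarrow> 'j set \<Rightarrow> ('j \<Rightarrow> 'i \<Rightarrow> real) \<Rightarrow> bool" where
  "orthonormal_rows I J c \<longleftrightarrow> (\<forall>j\<in>J. \<forall>j'\<in>J. (\<Sum>i\<in>I. c j i * c j' i) = (if j = j' then 1 else 0))"

lemma measurable_lin_map: "lin_map I J c \<in> measurable (std_gauss_on I) (std_gauss_on J)"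
  unfolding lin_map_def std_gauss_on_def by measurable

lemma sum_remove2:
  assumes "finite I" "p \<in> I" "q \<in> I" "p \<noteq> q"
  shows "(\<Sum>i\<in>I. F i) = F p + F q + (\<Sum>i\<in>I - {p, q}. F i)"
  using assms by (simp add: sum.remove[of I p] sum.remove[of "I - {p}" q] Diff_insert2[symmetric] insert_commute add.assoc)

lemma sum_givens_mult:
  assumes "finite I" "p \<in> I" "q \<in> I" "p \<noteq> q" "cs\<^sup>2 + sn\<^sup>2 = 1"
  shows "(\<Sum>i\<in>I. givens p q cs sn u i * givens p q cs sn w i) = (\<Sum>i\<in>I. u i * w i)"
proof -
  have "(cs * u p - sn * u q) * (cs * w p - sn * w q) + (sn * u p + cs * u q) * (sn * w p + cs * w q)
      = (cs\<^sup>2 + sn\<^sup>2) * (u p * w p + u q * w q)"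
    by algebra
  with assms show ?thesis
    by (simp add: sum_remove2[OF assms(1-4)] givens_def)
qed

lemma sum_reflect_mult:
  assumes "finite I" "p \<in> I"
  shows "(\<Sum>i\<in>I. reflect p u i * reflect p w i) = (\<Sum>i\<in>I. u i * w i)"
  using assms by (simp add: sum.remove reflect_def)

lemma lin_map_givens:
  assumes "finite I" "p \<in> I" "q \<in> I" "p \<noteq> q"
  shows "lin_map I J c (givens p q cs (- sn) x) = lin_map I J (\<lambda>j. givens p q cs sn (c j)) x"
proof -
  have "c j p * (cs * x p + sn * x q) + c j q * (- sn * x p + cs * x q)
      = (cs * c j p - sn * c j q) * x p + (sn * c j p + cs * c j q) * x q" for j
    by algebra
  with assms show ?thesis
    by (simp add: lin_map_def sum_remove2[OF assms] givens_def)
qed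

lemma lin_map_reflect:
  assumes "finite I" "p \<in> I"
  shows "lin_map I J c (reflect p x) = lin_map I J (\<lambda>j. reflect p (c j)) x"
  using assms by (simp add: lin_map_def sum.remove reflect_def)

inductive givens_reachable :: "'i set \<Rightarrow> ('j \<Rightarrow> 'i \<Rightarrow> real) \<Rightarrow> ('j \<Rightarrow> 'i \<Rightarrow> real) \<Rightarrow> bool"
  for I c where
  base: "givens_reachable I c c"
| givens: "givens_reachable I c c' \<Longrightarrow> p \<in> I \<Longrightarrow> q \<in> I \<Longrightarrow> p \<noteq> q \<Longrightarrow> cs\<^sup>2 + sn\<^sup>2 = 1 \<Longrightarrow>
    givens_reachable I c (\<lambda>j. givens p q cs sn (c' j))"
| reflect: "givens_reachable I c c' \<Longrightarrow> p \<in> I \<Longrightarrow> givens_reachable I c (\<lambda>j. reflect p (c' j))"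

lemma givens_reachable_trans:
  "givens_reachable I c' c'' \<Longrightarrow> givens_reachable I c c' \<Longrightarrow> givens_reachable I c c''"
  by (induction rule: givens_reachable.induct) (auto intro: givens_reachable.intros)

lemma givens_reachable_inner:
  assumes "givens_reachable I c c'" "finite I"
  shows "(\<Sum>i\<in>I. c' j i * c' j' i) = (\<Sum>i\<in>I. c j i * c j' i)"
  using assms by induction (simp_all add: sum_givens_mult sum_reflect_mult)

lemma givens_reachable_orthonormal_rows:
  "givens_reachable I c c' \<Longrightarrow> finite I \<Longrightarrow> orthonormal_rows I J c \<Longrightarrow> orthonormal_rows I J c'"
  by (simp add: orthonormal_rows_def givens_reachable_inner)

lemma givens_reachable_nn_integral:
  assumes "givens_reachable I c c'" "finite I" and f[measurable]: "f \<in> borel_measurable (std_gauss_on J)"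
  shows "(\<integral>\<^sup>+x. f (lin_map I J c' x) \<partial>std_gauss_on I) = (\<integral>\<^sup>+x. f (lin_map I J c x) \<partial>std_gauss_on I)"
  using assms(1)
proof induction
  case (givens c' p q cs sn)
  have [measurable]: "(\<lambda>x. f (lin_map I J c' x)) \<in> borel_measurable (std_gauss_on I)"
    using measurable_lin_map by measurable
  have "cs\<^sup>2 + (- sn)\<^sup>2 = 1" using givens by simp
  then have "(\<integral>\<^sup>+x. f (lin_map I J c' (givens p q cs (- sn) x)) \<partial>std_gauss_on I)
      = (\<integral>\<^sup>+x. f (lin_map I J c' x) \<partial>std_gauss_on I)"
    using givens assms(2) by (intro nn_integral_std_gauss_on_givens) measurable
  with givens assms(2) show ?case by (simp add: lin_map_givens)
next
  case (reflect c' p)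
  have [measurable]: "(\<lambda>x. f (lin_map I J c' x)) \<in> borel_measurable (std_gauss_on I)"
    using measurable_lin_map by measurable
  have "(\<integral>\<^sup>+x. f (lin_map I J c' (reflect p x)) \<partial>std_gauss_on I)
      = (\<integral>\<^sup>+x. f (lin_map I J c' x) \<partial>std_gauss_on I)"
    using reflect assms(2) by (intro nn_integral_std_gauss_on_reflect) measurable
  with reflect assms(2) show ?case by (simp add: lin_map_reflect)
qed simp

text \<open>One rotation in the plane \<open>(p, i)\<close> per \<open>i \<in> S\<close>; the rows in \<open>J\<close> vanish in all these
  planes and are therefore not moved.\<close>
lemma givens_reachable_clear_row:
  assumes "finite I" "finite S" "S \<subseteq> I" "p \<in> I" "p \<notin> S" "j0 \<notin> J"
    and "\<forall>j\<in>J. c j p = 0 \<and> (\<forall>i\<in>S. c j i = 0)"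
  shows "\<exists>c'. givens_reachable I c c' \<and> (\<forall>j\<in>J. c' j = c j) \<and> (\<forall>i\<in>S. c' j0 i = 0)"
  using assms(2-)
proof (induction S rule: finite_induct)
  case empty
  show ?case by (intro exI[of _ c]) (simp add: givens_reachable.base)
next
  case (insert i S)
  then obtain c' where c': "givens_reachable I c c'" "\<forall>j\<in>J. c' j = c j" "\<forall>i\<in>S. c' j0 i = 0"
    by auto
  define a where "a = c' j0 p"
  define b where "b = c' j0 i"
  show ?case
  proof (cases "b = 0")
    case True
    with c' show ?thesis by (intro exI[of _ c']) (auto simp: b_def)
  next
    case False
    have pos: "a\<^sup>2 + b\<^sup>2 > 0" using False by (simp add: add_nonneg_pos)
    define r where "r = sqrt (a\<^sup>2 + b\<^sup>2)"
    define cs where "cs = a / r"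
    define sn where "sn = - b / r"
    have "cs\<^sup>2 + sn\<^sup>2 = 1"
      using pos False by (simp add: cs_def sn_def r_def power_divide add_divide_distrib[symmetric])
    have "sn * a + cs * b = 0" by (simp add: cs_def sn_def field_simps)
    define c'' where "c'' j = givens p i cs sn (c' j)" for j
    have "givens_reachable I c c''"
      unfolding c''_def using c'(1) insert.prems \<open>cs\<^sup>2 + sn\<^sup>2 = 1\<close> by (intro givens_reachable.givens) auto
    moreover have "c'' j = c j" if "j \<in> J" for j
      using that c'(2) insert.prems by (auto simp: c''_def givens_def fun_eq_iff)
    moreover have "c'' j0 i' = 0" if "i' \<in> insert i S" for i'
      using that c'(3) insert.prems \<open>sn * a + cs * b = 0\<close> by (auto simp: c''_def givens_def a_def b_def)
    ultimately show ?thesis by blast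
  qed
qed

lemma sum_mult_indicator_row:
  fixes x :: "'i \<Rightarrow> real"
  assumes "finite I" "p \<in> I"
  shows "(\<Sum>i\<in>I. x i * (if i = p then 1 else 0)) = x p"
proof -
  have "(\<Sum>i\<in>I. x i * (if i = p then 1 else 0)) = (\<Sum>i\<in>I. if i = p then x p else 0)"
    by (rule sum.cong) auto
  with assms show ?thesis by simp
qed

lemma orthonormal_rows_coordinate_row:
  assumes "finite I" "orthonormal_rows I J c" "j0 \<in> J" "j \<in> J" "j0 \<noteq> j" "p \<in> I"
    and "\<forall>i\<in>I. c j i = (if i = p then 1 else 0)"
  shows "c j0 p = 0"
proof -
  have "(\<Sum>i\<in>I. c j0 i * c j i) = 0"
    using assms(2-5) by (auto simp: orthonormal_rows_def)
  moreover have "(\<Sum>i\<in>I. c j0 i * c j i) = (\<Sum>i\<in>I. c j0 i * (if i = p then 1 else 0))"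
    using assms(7) by (intro sum.cong) auto
  ultimately show ?thesis
    using sum_mult_indicator_row[OF assms(1,6)] by simp
qed

lemma sum_squares_eq_1_single_support:
  fixes x :: "'i \<Rightarrow> real"
  assumes "finite I" "p \<in> I" "(\<Sum>i\<in>I. x i * x i) = 1" "\<forall>i\<in>I. i \<noteq> p \<longrightarrow> x i = 0"
  shows "x p = 1 \<or> x p = -1"
proof -
  have "(\<Sum>i\<in>I. x i * x i) = (\<Sum>i\<in>I. if i = p then x p * x p else 0)"
    using assms(4) by (intro sum.cong) auto
  then have "x p * x p = 1"
    using assms(1-3) by simp
  then show ?thesis
    by (metis mult_cancel_left1 mult_minus_left square_eq_1_iff)
qed

lemma givens_reachable_coordinate_row:
  assumes I: "finite I" and "j0 \<notin> J" "orthonormal_rows I (insert j0 J) c" "\<pi> ` J \<subseteq> I"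
    and coord: "\<forall>j\<in>J. \<forall>i\<in>I. c j i = (if i = \<pi> j then 1 else 0)"
  shows "\<exists>c' p. givens_reachable I c c' \<and> p \<in> I - \<pi> ` J \<and> (\<forall>j\<in>J. c' j = c j)
    \<and> (\<forall>i\<in>I. c' j0 i = (if i = p then 1 else 0))"
proof -
  have "(\<Sum>i\<in>I. c j0 i * c j0 i) = 1"
    using assms(3) by (simp add: orthonormal_rows_def)
  then obtain p where p: "p \<in> I" "c j0 p \<noteq> 0"
    by (metis (no_types, lifting) mult_zero_left sum.neutral zero_neq_one)
  have "c j0 (\<pi> j) = 0" if "j \<in> J" for j
    using orthonormal_rows_coordinate_row[OF I assms(3), of j0 j "\<pi> j"] that assms(2,4) coord by fastforce
  then have p_T: "p \<notin> \<pi> ` J" using p by auto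
  have "\<forall>j\<in>J. c j p = 0 \<and> (\<forall>i\<in>I - \<pi> ` J - {p}. c j i = 0)"
    using coord p(1) p_T by auto
  then obtain c2 where c2: "givens_reachable I c c2" "\<forall>j\<in>J. c2 j = c j"
    "\<forall>i\<in>I - \<pi> ` J - {p}. c2 j0 i = 0"
    using givens_reachable_clear_row[OF I, of "I - \<pi> ` J - {p}" p j0 J c] I p(1) assms(2)
    by auto
  have orth2: "orthonormal_rows I (insert j0 J) c2"
    using givens_reachable_orthonormal_rows[OF c2(1) I assms(3)] .
  have "c2 j0 (\<pi> j) = 0" if "j \<in> J" for j
    using orthonormal_rows_coordinate_row[OF I orth2, of j0 j "\<pi> j"] that assms(2,4) coord c2(2) by fastforce
  then have supp: "\<forall>i\<in>I. i \<noteq> p \<longrightarrow> c2 j0 i = 0"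
    using c2(3) by blast
  moreover have "(\<Sum>i\<in>I. c2 j0 i * c2 j0 i) = 1"
    using orth2 by (simp add: orthonormal_rows_def)
  ultimately have "c2 j0 p = 1 \<or> c2 j0 p = -1"
    using sum_squares_eq_1_single_support[OF I p(1)] by blast
  then show ?thesis
  proof
    assume "c2 j0 p = 1"
    with c2 supp p(1) p_T show ?thesis by (intro exI[of _ c2] exI[of _ p]) auto
  next
    assume "c2 j0 p = -1"
    moreover have "\<forall>j\<in>J. c2 j p = 0" using c2(2) coord p p_T by auto
    ultimately show ?thesis
      using givens_reachable.reflect[OF c2(1) p(1)] supp p(1) p_T c2(2)
      by (intro exI[of _ "\<lambda>j. reflect p (c2 j)"] exI[of _ p]) (auto simp: reflect_def fun_eq_iff)
  qed
qed

text \<open>The Givens QR decomposition of a matrix with orthonormal rows.\<close>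
lemma givens_reachable_coordinate_rows:
  assumes I: "finite I" and "finite J" "orthonormal_rows I J c"
  shows "\<exists>c' \<pi>. givens_reachable I c c' \<and> inj_on \<pi> J \<and> \<pi> ` J \<subseteq> I \<and>
    (\<forall>j\<in>J. \<forall>i\<in>I. c' j i = (if i = \<pi> j then 1 else 0))"
  using assms(2,3)
proof (induction J rule: finite_induct)
  case empty
  show ?case by (intro exI[of _ c]) (simp add: givens_reachable.base)
next
  case (insert j0 J)
  have "orthonormal_rows I J c" using insert.prems by (simp add: orthonormal_rows_def)
  then obtain c1 \<pi> where c1: "givens_reachable I c c1" "inj_on \<pi> J" "\<pi> ` J \<subseteq> I"
    "\<forall>j\<in>J. \<forall>i\<in>I. c1 j i = (if i = \<pi> j then 1 else 0)"
    using insert.IH by blast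
  have "orthonormal_rows I (insert j0 J) c1"
    using givens_reachable_orthonormal_rows[OF c1(1) I insert.prems] .
  then obtain c2 p where c2: "givens_reachable I c1 c2" "p \<in> I - \<pi> ` J" "\<forall>j\<in>J. c2 j = c1 j"
    "\<forall>i\<in>I. c2 j0 i = (if i = p then 1 else 0)"
    using givens_reachable_coordinate_row[OF I insert.hyps(2) _ c1(3,4)] by blast
  show ?case
  proof (intro exI[of _ c2] exI[of _ "\<pi>(j0 := p)"] conjI)
    show "givens_reachable I c c2"
      by (rule givens_reachable_trans[OF c2(1) c1(1)])
    show "inj_on (\<pi>(j0 := p)) (insert j0 J)"
      using c1(2) c2(2) insert.hyps by (auto simp: inj_on_def)
    show "\<forall>j\<in>insert j0 J. \<forall>i\<in>I. c2 j i = (if i = (\<pi>(j0 := p)) j then 1 else 0)"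
      using c1(4) c2(3,4) insert.hyps by auto
  qed (use c1(3) c2(2) in auto)
qed

theorem nn_integral_std_gauss_on_orthonormal:
  assumes "finite I" "finite J" "orthonormal_rows I J c"
    and [measurable]: "f \<in> borel_measurable (std_gauss_on J)"
  shows "(\<integral>\<^sup>+x. f (lin_map I J c x) \<partial>std_gauss_on I) = (\<integral>\<^sup>+y. f y \<partial>std_gauss_on J)"
proof -
  obtain c' \<pi> where c': "givens_reachable I c c'" "inj_on \<pi> J" "\<pi> ` J \<subseteq> I"
    "\<forall>j\<in>J. \<forall>i\<in>I. c' j i = (if i = \<pi> j then 1 else 0)"
    using givens_reachable_coordinate_rows[OF assms(1-3)] by blast
  have "(\<Sum>i\<in>I. c' j i * x i) = x (\<pi> j)" if "j \<in> J" for j x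
  proof -
    have "(\<Sum>i\<in>I. c' j i * x i) = (\<Sum>i\<in>I. x i * (if i = \<pi> j then 1 else 0))"
      using c'(4) that by (intro sum.cong) auto
    also have "\<dots> = x (\<pi> j)"
      using c'(3) that by (intro sum_mult_indicator_row[OF assms(1)]) auto
    finally show ?thesis .
  qed
  then have "lin_map I J c' x = (\<lambda>j\<in>J. x (\<pi> j))" for x
    by (auto simp: lin_map_def)
  then have "(\<integral>\<^sup>+x. f (lin_map I J c x) \<partial>std_gauss_on I) = (\<integral>\<^sup>+x. f (\<lambda>j\<in>J. x (\<pi> j)) \<partial>std_gauss_on I)"
    using givens_reachable_nn_integral[OF c'(1) assms(1,4)] by simp
  also have "\<dots> = (\<integral>\<^sup>+y. f y \<partial>std_gauss_on J)"
    using c'(2,3) by (rule nn_integral_std_gauss_on_reindex) measurable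
  finally show ?thesis .
qed

text \<open>A linear form \<open>\<Sum>j. \<gamma> j * y j\<close> in standard Gaussian coordinates is \<open>|\<gamma>|\<close> times
  a standard Gaussian variable, the single orthonormal row being \<open>\<gamma> / |\<gamma>|\<close>.\<close>
lemma nn_integral_std_gauss_on_linear_square:
  assumes K: "finite K"
  shows "(\<integral>\<^sup>+y. ennreal ((\<Sum>j\<in>K. \<gamma> j * y j)\<^sup>2) \<partial>std_gauss_on K) = ennreal (\<Sum>j\<in>K. (\<gamma> j)\<^sup>2)"
proof (cases "\<forall>j\<in>K. \<gamma> j = 0")
  case True
  then show ?thesis by simp
next
  case False
  define \<rho> where "\<rho> = sqrt (\<Sum>j\<in>K. (\<gamma> j)\<^sup>2)"
  have pos: "(\<Sum>j\<in>K. (\<gamma> j)\<^sup>2) > 0"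
    using False K by (metis (no_types, lifting) power_zero_numeral sum_nonneg_eq_0_iff zero_le_power2
      zero_less_power2 less_eq_real_def sum_pos2)
  then have \<rho>: "\<rho> > 0" "\<rho>\<^sup>2 = (\<Sum>j\<in>K. (\<gamma> j)\<^sup>2)"
    by (simp_all add: \<rho>_def)
  define c where "c (u :: unit) j = \<gamma> j / \<rho>" for u j
  have "orthonormal_rows K {()} c"
    using \<rho> pos by (simp add: orthonormal_rows_def c_def power2_eq_square sum_divide_distrib[symmetric])
  have [measurable]: "lin_map K {()} c \<in> measurable (std_gauss_on K) (std_gauss_on {()})"
    "(\<lambda>y. lin_map K {()} c y ()) \<in> borel_measurable (std_gauss_on K)"
    by (rule measurable_lin_map) (simp add: lin_map_def, measurable)
  have "(\<Sum>j\<in>K. \<gamma> j * y j)\<^sup>2 = \<rho>\<^sup>2 * (lin_map K {()} c y ())\<^sup>2" for y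
    using \<rho>(1) by (simp add: lin_map_def c_def power2_eq_square sum_divide_distrib[symmetric] field_simps)
  then have "(\<integral>\<^sup>+y. ennreal ((\<Sum>j\<in>K. \<gamma> j * y j)\<^sup>2) \<partial>std_gauss_on K)
      = (\<integral>\<^sup>+y. ennreal (\<rho>\<^sup>2) * ennreal ((lin_map K {()} c y ())\<^sup>2) \<partial>std_gauss_on K)"
    by (simp add: ennreal_mult')
  also have "\<dots> = ennreal (\<rho>\<^sup>2) * (\<integral>\<^sup>+y. ennreal ((lin_map K {()} c y ())\<^sup>2) \<partial>std_gauss_on K)"
    by (rule nn_integral_cmult) measurable
  also have "(\<integral>\<^sup>+y. ennreal ((lin_map K {()} c y ())\<^sup>2) \<partial>std_gauss_on K)
      = (\<integral>\<^sup>+z. ennreal ((z ())\<^sup>2) \<partial>std_gauss_on {()})"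
    using K \<open>orthonormal_rows K {()} c\<close> by (intro nn_integral_std_gauss_on_orthonormal) measurable
  also have "(\<integral>\<^sup>+z. ennreal ((z ())\<^sup>2) \<partial>std_gauss_on {()}) = 1"
    using std_gauss_product.product_nn_integral_singleton[of "\<lambda>t. ennreal (t\<^sup>2)" "()"]
    by (simp add: std_gauss_on_def nn_integral_std_gauss_square)
  finally show ?thesis by (simp add: \<rho>(2))
qed


section \<open>An orthonormal frame for \<open>k*\<close>, \<open>k\<close>, \<open>v*\<close>, \<open>v\<close>\<close>

lemma dotp_commute: "dotp D a b = dotp D b a"
  by (simp add: dotp_def mult.commute)

lemma dotp_diff_scale_left: "dotp D (\<lambda>d. a d - c * b d) w = dotp D a w - c * dotp D b w"
  by (simp add: dotp_def algebra_simps sum_subtractf sum_distrib_left)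

lemma dotp_diff_scale_right: "dotp D w (\<lambda>d. a d - c * b d) = dotp D w a - c * dotp D w b"
  by (simp add: dotp_def algebra_simps sum_subtractf sum_distrib_left)

lemma dotp_self_nonneg: "dotp D a a \<ge> 0"
  by (simp add: dotp_def sum_nonneg)

lemma dotp_self_eq_0: "dotp D a a = 0 \<Longrightarrow> d < D \<Longrightarrow> a d = 0"
  unfolding dotp_def by (subst (asm) sum_nonneg_eq_0_iff) auto

lemma
  assumes "dotp D u u = real D" "D > 0"
  shows dotp_reject: "dotp D (\<lambda>d. a d - dotp D a u / D * u d) u = 0"
    and dotp_reject_self: "dotp D (\<lambda>d. a d - dotp D a u / D * u d) (\<lambda>d. a d - dotp D a u / D * u d)
      = dotp D a a - (dotp D a u)\<^sup>2 / D"
  using assms unfolding dotp_diff_scale_left dotp_diff_scale_right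
  by (simp_all add: dotp_commute[of D u a] power2_eq_square)

locale risk_geometry =
  fixes D :: nat and ks vs k v :: "nat \<Rightarrow> real"
  assumes D_pos: "D \<ge> 1"
    and ks_norm: "dotp D ks ks = real D" and vs_norm: "dotp D vs vs = real D"
    and ks_vs: "dotp D ks vs = 0"
    and k_vs: "dotp D k vs = 0" and v_ks: "dotp D v ks = 0" and k_v: "dotp D k v = 0"
begin

definition "m_kk = dotp D k ks / D"
definition "m_vv = dotp D v vs / D"
definition "R_kk = sqrt (dotp D k k / D - m_kk\<^sup>2)"
definition "R_vv = sqrt (dotp D v v / D - m_vv\<^sup>2)"
definition "k_perp d = k d - m_kk * ks d"
definition "v_perp d = v d - m_vv * vs d"

lemma k_perp_ks: "dotp D k_perp ks = 0"
  using dotp_reject[OF ks_norm] D_pos by (simp add: k_perp_def[abs_def] m_kk_def)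

lemma v_perp_vs: "dotp D v_perp vs = 0"
  using dotp_reject[OF vs_norm] D_pos by (simp add: v_perp_def[abs_def] m_vv_def)

lemma k_perp_vs: "dotp D k_perp vs = 0"
  by (simp add: k_perp_def[abs_def] dotp_diff_scale_left k_vs ks_vs)

lemma v_perp_ks: "dotp D v_perp ks = 0"
  by (simp add: v_perp_def[abs_def] dotp_diff_scale_left v_ks ks_vs dotp_commute[of D vs])

lemma k_perp_v_perp: "dotp D k_perp v_perp = 0"
  by (simp add: v_perp_def[abs_def] dotp_diff_scale_right k_perp_vs)
     (simp add: k_perp_def[abs_def] dotp_diff_scale_left k_v dotp_commute[of D ks] v_ks)

lemma k_perp_self: "dotp D k_perp k_perp = real D * R_kk\<^sup>2"
proof -
  have "dotp D k_perp k_perp = dotp D k k - (dotp D k ks)\<^sup>2 / D"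
    using dotp_reject_self[OF ks_norm] D_pos by (simp add: k_perp_def[abs_def] m_kk_def)
  then have "dotp D k k / D - m_kk\<^sup>2 = dotp D k_perp k_perp / D"
    using D_pos by (simp add: m_kk_def field_simps power2_eq_square) (simp add: distrib_left[symmetric])
  then have "R_kk\<^sup>2 = dotp D k_perp k_perp / D"
    using dotp_self_nonneg[of D k_perp] by (simp add: R_kk_def)
  then show ?thesis
    using D_pos by simp
qed

lemma v_perp_self: "dotp D v_perp v_perp = real D * R_vv\<^sup>2"
proof -
  have "dotp D v_perp v_perp = dotp D v v - (dotp D v vs)\<^sup>2 / D"
    using dotp_reject_self[OF vs_norm] D_pos by (simp add: v_perp_def[abs_def] m_vv_def)
  then have "dotp D v v / D - m_vv\<^sup>2 = dotp D v_perp v_perp / D"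
    using D_pos by (simp add: m_vv_def field_simps power2_eq_square) (simp add: distrib_left[symmetric])
  then have "R_vv\<^sup>2 = dotp D v_perp v_perp / D"
    using dotp_self_nonneg[of D v_perp] by (simp add: R_vv_def)
  then show ?thesis
    using D_pos by simp
qed

definition "frame_vec t = [ks, k_perp, vs, v_perp] ! t"
definition "frame_len t = [1, R_kk, 1, R_vv] ! t"

text \<open>The orthonormal frame \<open>e\<^sub>0, \<dots>, e\<^sub>3\<close> of \<open>\<real>\<^sup>D\<^sup>+\<^sup>2\<close> along \<open>k*, k\<^sub>\<bottom>, v*, v\<^sub>\<bottom>\<close>.
  If \<open>R_kk = 0\<close> then \<open>k_perp = 0\<close>, the division yields \<open>0\<close>, and \<open>e\<^sub>1\<close> is the unit vector
  of the padding coordinate \<open>D\<close>; likewise \<open>e\<^sub>3\<close> and coordinate \<open>D + 1\<close> if \<open>R_vv = 0\<close>.\<close>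
definition frame :: "nat \<Rightarrow> nat \<Rightarrow> real" where
  "frame t d = (if d < D then frame_vec t d / (sqrt D * frame_len t)
     else if d = D + t div 2 \<and> frame_len t = 0 then 1 else 0)"

lemma less_4_cases: "t < 4 \<Longrightarrow> t = 0 \<or> t = 1 \<or> t = 2 \<or> t = 3"
  for t :: nat by auto

lemma dotp_frame_vec:
  assumes "t < 4" "t' < 4"
  shows "dotp D (frame_vec t) (frame_vec t') = (if t = t' then D * (frame_len t)\<^sup>2 else 0)"
  using less_4_cases[OF assms(1)] less_4_cases[OF assms(2)]
  by (auto simp: frame_vec_def frame_len_def ks_norm vs_norm k_perp_self v_perp_self
      ks_vs k_perp_ks k_perp_vs v_perp_vs v_perp_ks k_perp_v_perp dotp_commute[of D vs ks]
      dotp_commute[of D ks k_perp] dotp_commute[of D vs k_perp] dotp_commute[of D vs v_perp]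
      dotp_commute[of D ks v_perp] dotp_commute[of D v_perp k_perp])

lemma frame_vec_eq_0: "t < 4 \<Longrightarrow> frame_len t = 0 \<Longrightarrow> d < D \<Longrightarrow> frame_vec t d = 0"
  using dotp_frame_vec[of t t] by (auto intro: dotp_self_eq_0)

definition frame_coord :: "nat \<Rightarrow> (nat \<Rightarrow> real) \<Rightarrow> real" where
  "frame_coord t w = (\<Sum>d<D + 2. frame t d * w d)"

lemma frame_coord_eq:
  assumes "t < 4"
  shows "frame_coord t w
     = dotp D (frame_vec t) w / (sqrt D * frame_len t) + (if frame_len t = 0 then w (D + t div 2) else 0)"
proof -
  have "(\<Sum>d<D. frame t d * w d) = dotp D (frame_vec t) w / (sqrt D * frame_len t)"
    by (simp add: frame_def dotp_def sum_divide_distrib)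
  moreover have "t div 2 = 0 \<or> t div 2 = 1" using assms by auto
  ultimately show ?thesis
    by (auto simp: frame_coord_def numeral_2_eq_2 frame_def)
qed

lemma frame_coord_frame:
  assumes "t < 4" "t' < 4"
  shows "frame_coord t (frame t') = (if t = t' then 1 else 0)"
proof -
  have "(\<Sum>d<D. frame t d * frame t' d) = (if t = t' \<and> frame_len t \<noteq> 0 then 1 else 0)"
    using dotp_frame_vec[OF assms] D_pos
    by (simp add: frame_def dotp_def sum_divide_distrib[symmetric] power2_eq_square)
  moreover have "frame u D = (if u = 1 \<and> R_kk = 0 then 1 else 0)"
    "frame u (Suc D) = (if u = 3 \<and> R_vv = 0 then 1 else 0)" if "u < 4" for u
    using less_4_cases[OF that] by (auto simp: frame_def frame_len_def)
  ultimately show ?thesis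
    using assms less_4_cases[OF assms(1)] less_4_cases[OF assms(2)]
    by (auto simp: frame_coord_def numeral_2_eq_2 frame_len_def)
qed

lemma frame_len_mult_frame_coord:
  assumes "t < 4"
  shows "frame_len t * frame_coord t w = dotp D (frame_vec t) w / sqrt D"
proof (cases "frame_len t = 0")
  case True
  then show ?thesis
    using frame_vec_eq_0[OF assms True] by (simp add: dotp_def)
next
  case False
  then show ?thesis unfolding frame_coord_eq[OF assms] by simp
qed

lemma dotp_ks_frame_coord: "dotp D ks w / sqrt D = frame_coord 0 w"
  using frame_len_mult_frame_coord[of 0 w] by (simp add: frame_len_def frame_vec_def)

lemma dotp_vs_frame_coord: "dotp D vs w / sqrt D = frame_coord 2 w"
  using frame_len_mult_frame_coord[of 2 w] by (simp add: frame_len_def frame_vec_def)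

lemma dotp_k_frame_coord: "dotp D k w / sqrt D = m_kk * frame_coord 0 w + R_kk * frame_coord 1 w"
proof -
  have "dotp D k w = m_kk * dotp D ks w + dotp D k_perp w"
    by (simp add: dotp_def k_perp_def algebra_simps sum.distrib sum_distrib_left sum_subtractf)
  then show ?thesis
    using frame_len_mult_frame_coord[of 1 w]
    by (simp add: dotp_ks_frame_coord[symmetric] frame_len_def frame_vec_def add_divide_distrib)
qed

lemma dotp_v_frame_coord: "dotp D v w / sqrt D = m_vv * frame_coord 2 w + R_vv * frame_coord 3 w"
proof -
  have "dotp D v w = m_vv * dotp D vs w + dotp D v_perp w"
    by (simp add: dotp_def v_perp_def algebra_simps sum.distrib sum_distrib_left sum_subtractf)
  then show ?thesis
    using frame_len_mult_frame_coord[of 3 w]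
    by (simp add: dotp_vs_frame_coord[symmetric] frame_len_def frame_vec_def add_divide_distrib)
qed

definition data_index :: "nat \<Rightarrow> (nat \<times> nat) set" where
  "data_index L = {..<L} \<times> {..<D + 2}"

definition frame_index :: "nat \<Rightarrow> (nat \<times> nat) set" where
  "frame_index L = {..<L} \<times> {..<4}"

lemma finite_data_index: "finite (data_index L)"
  and finite_frame_index: "finite (frame_index L)"
  by (simp_all add: data_index_def frame_index_def)

definition frame_rows :: "nat \<times> nat \<Rightarrow> nat \<times> nat \<Rightarrow> real" where
  "frame_rows j i = (if fst i = fst j then frame (snd j) (snd i) else 0)"

lemma sum_frame_rows_mult:
  assumes "l < L"
  shows "(\<Sum>i\<in>data_index L. frame_rows (l, t) i * x i) = frame_coord t (\<lambda>d. x (l, d))"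
proof -
  have "(\<Sum>i\<in>data_index L. frame_rows (l, t) i * x i)
      = (\<Sum>l'<L. \<Sum>d<D + 2. frame_rows (l, t) (l', d) * x (l', d))"
    unfolding data_index_def sum.cartesian_product' ..
  also have "\<dots> = (\<Sum>l'<L. if l' = l then frame_coord t (\<lambda>d. x (l, d)) else 0)"
    unfolding frame_coord_def by (intro sum.cong refl) (auto simp: frame_rows_def)
  finally show ?thesis using assms by simp
qed

lemma orthonormal_frame_rows: "orthonormal_rows (data_index L) (frame_index L) frame_rows"
  unfolding orthonormal_rows_def frame_index_def
proof clarify
  fix l t l' t' :: nat assume "l < L" "t < 4" "l' < L" "t' < 4"
  moreover have "frame_coord t (\<lambda>d. frame_rows (l', t') (l, d))
      = (if l = l' then frame_coord t (frame t') else 0)"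
    by (simp add: frame_rows_def frame_coord_def)
  ultimately show "(\<Sum>i\<in>data_index L. frame_rows (l, t) i * frame_rows (l', t') i)
      = (if (l, t) = (l', t') then 1 else 0)"
    by (simp add: sum_frame_rows_mult frame_coord_frame)
qed

lemma lin_map_frame_rows:
  "l < L \<Longrightarrow> t < 4 \<Longrightarrow>
    lin_map (data_index L) (frame_index L) frame_rows x (l, t) = frame_coord t (\<lambda>d. x (l, d))"
  by (simp add: lin_map_def frame_index_def sum_frame_rows_mult)

end

section \<open>Reduction of the risk\<close>

lemma measurable_PiM_std_gauss_on_dotp [measurable]:
  assumes "l < L"
  shows "(\<lambda>X. dotp D (X l) w) \<in> borel_measurable (PiM {..<L} (\<lambda>_. std_gauss_on {..<D}))"
proof -
  have "(\<lambda>X. X l d) \<in> borel_measurable (PiM {..<L} (\<lambda>_. std_gauss_on {..<D}))" if "d < D" for d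
    using measurable_PiM_component_component[of l "{..<L}" d "{..<D}" "\<lambda>_ _. std_gauss"] that assms
    by (simp add: std_gauss_on_def measurable_cong_sets[OF refl sets_std_gauss])
  then show ?thesis
    unfolding dotp_def by (intro borel_measurable_sum borel_measurable_times) auto
qed

lemma measurable_proj [measurable]:
  "(\<lambda>X. proj L D X w) \<in> measurable (PiM {..<L} (\<lambda>_. std_gauss_on {..<D})) (borel_vec L)"
  unfolding proj_def vec_def borel_vec_def by (rule measurable_restrict) measurable

lemma measurable_proj_component [measurable]:
  "l < L \<Longrightarrow> (\<lambda>X. proj L D X w l) \<in> borel_measurable (PiM {..<L} (\<lambda>_. std_gauss_on {..<D}))"
  by (simp add: proj_def vec_def) measurable

lemma sum_residual_coefficients_square:
  fixes s :: "nat \<Rightarrow> real"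
  assumes "eps < L"
  shows "(\<Sum>l<L. ((if l = eps then 1 else 0) - m * s l)\<^sup>2 + (R * s l)\<^sup>2)
       = 1 - 2 * m * s eps + (m\<^sup>2 + R\<^sup>2) * (\<Sum>l<L. s l * s l)"
proof -
  have "(\<Sum>l<L. ((if l = eps then 1 else 0) - m * s l)\<^sup>2 + (R * s l)\<^sup>2)
      = (\<Sum>l<L. (if l = eps then 1 - 2 * m * s l else 0) + (m\<^sup>2 + R\<^sup>2) * (s l * s l))"
    by (intro sum.cong) (auto simp: power2_eq_square algebra_simps)
  also have "\<dots> = 1 - 2 * m * s eps + (m\<^sup>2 + R\<^sup>2) * (\<Sum>l<L. s l * s l)"
    using assms by (simp add: sum.distrib sum_distrib_left)
  finally show ?thesis .
qed

locale risk_setting = risk_geometry +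
  fixes g :: "nat \<Rightarrow> nat \<Rightarrow> (nat \<Rightarrow> real) \<Rightarrow> real"
    and \<sigma> :: "nat \<Rightarrow> (nat \<Rightarrow> real) \<Rightarrow> (nat \<Rightarrow> real)"
  assumes g_meas: "\<And>L eps. eps < L \<Longrightarrow> g L eps \<in> borel_measurable (borel_vec L)"
    and g_nonneg: "\<And>L eps x. eps < L \<Longrightarrow> g L eps x \<ge> 0"
    and \<sigma>_meas: "\<And>L l. l < L \<Longrightarrow> (\<lambda>x. \<sigma> L x l) \<in> borel_measurable (borel_vec L)"
begin

definition weighted_loss :: "nat \<Rightarrow> nat \<Rightarrow> (nat \<Rightarrow> nat \<Rightarrow> real) \<Rightarrow> real" where
  "weighted_loss L eps X = g L eps (proj L D X ks) * (proj L D X vs eps - model_out \<sigma> L D k v X)\<^sup>2"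

definition frame_loss :: "nat \<Rightarrow> nat \<Rightarrow> (nat \<times> nat \<Rightarrow> real) \<Rightarrow> real" where
  "frame_loss L eps Y = g L eps (vec L (\<lambda>l. Y (l, 0))) *
     (Y (eps, 2) - (\<Sum>l<L. \<sigma> L (vec L (\<lambda>l. m_kk * Y (l, 0) + R_kk * Y (l, 1))) l
                           * (m_vv * Y (l, 2) + R_vv * Y (l, 3))))\<^sup>2"

lemma measurable_g [measurable]: "eps < L \<Longrightarrow> g L eps \<in> borel_measurable (PiM {..<L} (\<lambda>_. borel))"
  using g_meas by (simp add: borel_vec_def)

lemma measurable_\<sigma> [measurable]: "l < L \<Longrightarrow> (\<lambda>x. \<sigma> L x l) \<in> borel_measurable (PiM {..<L} (\<lambda>_. borel))"
  using \<sigma>_meas by (simp add: borel_vec_def)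

lemma measurable_frame_loss:
  "eps < L \<Longrightarrow> frame_loss L eps \<in> borel_measurable (std_gauss_on (frame_index L))"
  unfolding frame_loss_def vec_def frame_index_def by measurable

lemma measurable_residual:
  "eps < L \<Longrightarrow> (\<lambda>X. (proj L D X vs eps - model_out \<sigma> L D k v X)\<^sup>2)
    \<in> borel_measurable (PiM {..<L} (\<lambda>_. std_gauss_on {..<D}))"
  unfolding model_out_def using \<sigma>_meas by measurable

lemma measurable_weighted_loss:
  "eps < L \<Longrightarrow> weighted_loss L eps \<in> borel_measurable (PiM {..<L} (\<lambda>_. std_gauss_on {..<D}))"
  unfolding weighted_loss_def using g_meas measurable_residual by measurable

lemma weighted_loss_eq_frame_loss:
  assumes "eps < L"
  shows "weighted_loss L eps (\<lambda>l\<in>{..<L}. \<lambda>d\<in>{..<D}. x (l, d))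
       = frame_loss L eps (lin_map (data_index L) (frame_index L) frame_rows x)"
proof -
  let ?X = "\<lambda>l\<in>{..<L}. \<lambda>d\<in>{..<D}. x (l, d)" and ?Y = "lin_map (data_index L) (frame_index L) frame_rows x"
  have proj: "proj L D ?X w = vec L (\<lambda>l. dotp D w (\<lambda>d. x (l, d)) / sqrt D)" for w
    by (auto simp: proj_def vec_def dotp_def mult.commute)
  have Y: "?Y (l, t) = frame_coord t (\<lambda>d. x (l, d))" if "l < L" "t < 4" for l t
    using that by (rule lin_map_frame_rows)
  have "proj L D ?X ks = vec L (\<lambda>l. ?Y (l, 0))"
    "proj L D ?X k = vec L (\<lambda>l. m_kk * ?Y (l, 0) + R_kk * ?Y (l, 1))"
    "proj L D ?X vs eps = ?Y (eps, 2)"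
    "l < L \<Longrightarrow> proj L D ?X v l = m_vv * ?Y (l, 2) + R_vv * ?Y (l, 3)" for l
    using assms by (auto simp: proj Y vec_def dotp_ks_frame_coord dotp_k_frame_coord
      dotp_vs_frame_coord dotp_v_frame_coord)
  then show ?thesis
    by (simp add: weighted_loss_def frame_loss_def model_out_def)
qed

definition reduced_loss :: "nat \<Rightarrow> nat \<Rightarrow> (nat \<Rightarrow> real) \<Rightarrow> (nat \<Rightarrow> real) \<Rightarrow> real" where
  "reduced_loss L eps chi xi = (let s = \<sigma> L (vec L (\<lambda>l. m_kk * chi l + R_kk * xi l)) in
     g L eps chi * (1 - 2 * m_vv * s eps + (m_vv\<^sup>2 + R_vv\<^sup>2) * (\<Sum>l<L. s l * s l)))"

lemma frame_index_split:
  "frame_index L = {..<L} \<times> {0, 1} \<union> {..<L} \<times> {2, 3}"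
  "({..<L} \<times> {0, 1}) \<inter> ({..<L} \<times> {2, 3 :: nat}) = {}"
  by (auto simp: frame_index_def)

lemma frame_loss_cong:
  assumes "eps < L" "\<And>l t. l < L \<Longrightarrow> t < 4 \<Longrightarrow> Y (l, t) = Y' (l, t)"
  shows "frame_loss L eps Y = frame_loss L eps Y'"
proof -
  have "vec L (\<lambda>l. Y (l, 0)) = vec L (\<lambda>l. Y' (l, 0))"
    "vec L (\<lambda>l. m_kk * Y (l, 0) + R_kk * Y (l, 1)) = vec L (\<lambda>l. m_kk * Y' (l, 0) + R_kk * Y' (l, 1))"
    using assms(2) by (auto simp: vec_def intro!: restrict_ext)
  then show ?thesis
    using assms by (simp add: frame_loss_def)
qed

text \<open>Given the \<open>k\<close>-side coordinates \<open>y1\<close>, the residual is a linear form with coefficients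
  \<open>\<gamma>\<close> in the Gaussian \<open>v\<close>-side coordinates \<open>y2\<close>, so its second moment is \<open>|\<gamma>|\<^sup>2\<close>.\<close>
lemma nn_integral_frame_loss_v_side:
  assumes "eps < L"
  shows "(\<integral>\<^sup>+y2. frame_loss L eps (merge ({..<L} \<times> {0, 1}) ({..<L} \<times> {2, 3}) (y1, y2))
            \<partial>std_gauss_on ({..<L} \<times> {2, 3}))
       = reduced_loss L eps (vec L (\<lambda>l. y1 (l, 0))) (vec L (\<lambda>l. y1 (l, 1)))"
proof -
  let ?Jv = "{..<L} \<times> {2, 3 :: nat}"
  define s where "s = \<sigma> L (vec L (\<lambda>l. m_kk * y1 (l, 0) + R_kk * y1 (l, 1)))"
  define \<gamma> where "\<gamma> j = (if snd j = 2 then (if fst j = eps then 1 else 0) - m_vv * s (fst j)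
                                    else - (R_vv * s (fst j)))" for j :: "nat \<times> nat"
  have sum_Jv: "(\<Sum>j\<in>?Jv. f j) = (\<Sum>l<L. f (l, 2) + f (l, 3))" for f :: "nat \<times> nat \<Rightarrow> real"
    by (simp add: sum.cartesian_product')
  have "frame_loss L eps (merge ({..<L} \<times> {0, 1}) ?Jv (y1, y2))
      = frame_loss L eps (\<lambda>(l, t). if t < 2 then y1 (l, t) else y2 (l, t))" for y2
    using assms by (intro frame_loss_cong) (auto simp: merge_def)
  moreover have "(\<Sum>j\<in>?Jv. \<gamma> j * y2 j) = y2 (eps, 2) - (\<Sum>l<L. s l * (m_vv * y2 (l, 2) + R_vv * y2 (l, 3)))"
    for y2
  proof -
    have "(\<Sum>j\<in>?Jv. \<gamma> j * y2 j)
        = (\<Sum>l<L. (if l = eps then y2 (l, 2) else 0) - s l * (m_vv * y2 (l, 2) + R_vv * y2 (l, 3)))"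
      unfolding sum_Jv by (intro sum.cong) (auto simp: \<gamma>_def algebra_simps)
    also have "\<dots> = y2 (eps, 2) - (\<Sum>l<L. s l * (m_vv * y2 (l, 2) + R_vv * y2 (l, 3)))"
      using assms by (simp add: sum_subtractf)
    finally show ?thesis .
  qed
  ultimately have loss: "frame_loss L eps (merge ({..<L} \<times> {0, 1}) ?Jv (y1, y2))
      = g L eps (vec L (\<lambda>l. y1 (l, 0))) * (\<Sum>j\<in>?Jv. \<gamma> j * y2 j)\<^sup>2" for y2
    by (simp add: frame_loss_def s_def)
  have sum_sq: "(\<Sum>j\<in>?Jv. (\<gamma> j)\<^sup>2) = 1 - 2 * m_vv * s eps + (m_vv\<^sup>2 + R_vv\<^sup>2) * (\<Sum>l<L. s l * s l)"
    unfolding sum_Jv using sum_residual_coefficients_square[OF assms, of m_vv s R_vv]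
    by (simp add: \<gamma>_def)
  have "s = \<sigma> L (vec L (\<lambda>l. m_kk * vec L (\<lambda>l. y1 (l, 0)) l + R_kk * vec L (\<lambda>l. y1 (l, 1)) l))"
    unfolding s_def by (auto simp: vec_def intro!: arg_cong[where f = "\<sigma> L"] restrict_ext)
  then have reduced: "reduced_loss L eps (vec L (\<lambda>l. y1 (l, 0))) (vec L (\<lambda>l. y1 (l, 1)))
      = g L eps (vec L (\<lambda>l. y1 (l, 0))) * (\<Sum>j\<in>?Jv. (\<gamma> j)\<^sup>2)"
    by (simp add: reduced_loss_def Let_def sum_sq)
  have "(\<integral>\<^sup>+y2. frame_loss L eps (merge ({..<L} \<times> {0, 1}) ?Jv (y1, y2)) \<partial>std_gauss_on ?Jv)
      = (\<integral>\<^sup>+y2. ennreal (g L eps (vec L (\<lambda>l. y1 (l, 0)))) * ennreal ((\<Sum>j\<in>?Jv. \<gamma> j * y2 j)\<^sup>2)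
          \<partial>std_gauss_on ?Jv)"
    unfolding loss using g_nonneg[OF assms] by (simp add: ennreal_mult)
  also have "\<dots> = ennreal (g L eps (vec L (\<lambda>l. y1 (l, 0)))) * ennreal (\<Sum>j\<in>?Jv. (\<gamma> j)\<^sup>2)"
    by (subst nn_integral_cmult) (measurable, simp add: nn_integral_std_gauss_on_linear_square)
  finally show ?thesis
    unfolding reduced using g_nonneg[OF assms] by (simp add: ennreal_mult sum_nonneg)
qed

lemma measurable_reduced_loss:
  "eps < L \<Longrightarrow> (\<lambda>(chi, xi). ennreal (reduced_loss L eps chi xi))
    \<in> borel_measurable (std_gauss_on {..<L} \<Otimes>\<^sub>M std_gauss_on {..<L})"
  unfolding reduced_loss_def vec_def Let_def by measurable

lemma nn_integral_weighted_loss: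
  assumes "eps < L"
  shows "(\<integral>\<^sup>+X. weighted_loss L eps X \<partial>gauss_mat L D)
       = (\<integral>\<^sup>+(chi, xi). reduced_loss L eps chi xi \<partial>(gauss_vec L \<Otimes>\<^sub>M gauss_vec L))"
proof -
  let ?Jk = "{..<L} \<times> {0, 1 :: nat}" and ?Jv = "{..<L} \<times> {2, 3 :: nat}"
  have meas_frame: "(\<lambda>Y. ennreal (frame_loss L eps Y)) \<in> borel_measurable (std_gauss_on (frame_index L))"
    using measurable_frame_loss[OF assms] by measurable
  have [measurable]: "weighted_loss L eps \<in> borel_measurable (PiM {..<L} (\<lambda>_. std_gauss_on {..<D}))"
    using assms by (rule measurable_weighted_loss)
  have "(\<integral>\<^sup>+X. weighted_loss L eps X \<partial>gauss_mat L D)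
      = (\<integral>\<^sup>+x. weighted_loss L eps (\<lambda>l\<in>{..<L}. \<lambda>d\<in>{..<D}. x (l, d)) \<partial>std_gauss_on (data_index L))"
    unfolding gauss_mat_def gauss_vec_def std_gauss_on_def[symmetric]
    by (rule nn_integral_PiM_std_gauss_on) (auto simp: finite_data_index data_index_def)
  also have "\<dots> = (\<integral>\<^sup>+x. frame_loss L eps (lin_map (data_index L) (frame_index L) frame_rows x)
      \<partial>std_gauss_on (data_index L))"
    using assms by (simp add: weighted_loss_eq_frame_loss)
  also have "\<dots> = (\<integral>\<^sup>+Y. frame_loss L eps Y \<partial>std_gauss_on (frame_index L))"
    by (intro nn_integral_std_gauss_on_orthonormal finite_data_index finite_frame_index
        orthonormal_frame_rows meas_frame)
  also have "\<dots> = (\<integral>\<^sup>+y1. \<integral>\<^sup>+y2. frame_loss L eps (merge ?Jk ?Jv (y1, y2)) \<partial>std_gauss_on ?Jv \<partial>std_gauss_on ?Jk)"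
    using frame_index_split(2) meas_frame unfolding frame_index_split(1)
    by (intro nn_integral_std_gauss_on_Un) auto
  also have "\<dots> = (\<integral>\<^sup>+y1. reduced_loss L eps (\<lambda>l\<in>{..<L}. y1 (l, 0)) (\<lambda>l\<in>{..<L}. y1 (l, 1)) \<partial>std_gauss_on ?Jk)"
    using nn_integral_frame_loss_v_side[OF assms] by (simp add: vec_def)
  also have "\<dots> = (\<integral>\<^sup>+(chi, xi). ennreal (reduced_loss L eps chi xi)
      \<partial>(std_gauss_on {..<L} \<Otimes>\<^sub>M std_gauss_on {..<L}))"
    using measurable_reduced_loss[OF assms] by (intro nn_integral_std_gauss_on_Times_doubleton) auto
  finally show ?thesis
    by (simp add: gauss_vec_def std_gauss_on_def split_beta')
qed

lemma reduced_loss_nonneg: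
  assumes "eps < L"
  shows "reduced_loss L eps chi xi \<ge> 0"
proof -
  define s where "s = \<sigma> L (vec L (\<lambda>l. m_kk * chi l + R_kk * xi l))"
  have "s eps * s eps \<le> (\<Sum>l<L. s l * s l)"
    using assms by (intro member_le_sum) auto
  then have "m_vv\<^sup>2 * (s eps * s eps) \<le> (m_vv\<^sup>2 + R_vv\<^sup>2) * (\<Sum>l<L. s l * s l)"
    by (intro mult_mono) (auto intro: sum_nonneg)
  moreover have "1 - 2 * m_vv * s eps + m_vv\<^sup>2 * (s eps * s eps) = (1 - m_vv * s eps)\<^sup>2"
    by (simp add: power2_eq_square algebra_simps)
  ultimately have "1 - 2 * m_vv * s eps + (m_vv\<^sup>2 + R_vv\<^sup>2) * (\<Sum>l<L. s l * s l) \<ge> 0"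
    by (smt (verit) zero_le_power2)
  with g_nonneg[OF assms] show ?thesis
    by (simp add: reduced_loss_def Let_def s_def)
qed

lemma integral_data_X_residual:
  assumes "eps < L"
  shows "(\<integral>X. (proj L D X vs eps - model_out \<sigma> L D k v X)\<^sup>2 \<partial>data_X g L D ks eps)
       = (\<integral>(chi, xi). reduced_loss L eps chi xi \<partial>(gauss_vec L \<Otimes>\<^sub>M gauss_vec L))"
proof -
  have gauss_mat: "gauss_mat L D = PiM {..<L} (\<lambda>_. std_gauss_on {..<D})"
    by (simp add: gauss_mat_def gauss_vec_def std_gauss_on_def)
  have [measurable]: "(\<lambda>X. (proj L D X vs eps - model_out \<sigma> L D k v X)\<^sup>2) \<in> borel_measurable (gauss_mat L D)"
    "(\<lambda>X. g L eps (proj L D X ks)) \<in> borel_measurable (gauss_mat L D)"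
    "weighted_loss L eps \<in> borel_measurable (gauss_mat L D)"
    unfolding gauss_mat using assms g_meas measurable_residual measurable_weighted_loss by measurable
  have "(\<integral>X. (proj L D X vs eps - model_out \<sigma> L D k v X)\<^sup>2 \<partial>data_X g L D ks eps)
      = (\<integral>X. weighted_loss L eps X \<partial>gauss_mat L D)"
    unfolding data_X_def using g_nonneg[OF assms]
    by (subst integral_density) (auto simp: weighted_loss_def[abs_def])
  also have "\<dots> = enn2real (\<integral>\<^sup>+X. weighted_loss L eps X \<partial>gauss_mat L D)"
    using g_nonneg[OF assms] by (intro integral_eq_nn_integral) (auto simp: weighted_loss_def)
  also have "\<dots> = (\<integral>(chi, xi). reduced_loss L eps chi xi \<partial>(gauss_vec L \<Otimes>\<^sub>M gauss_vec L))"
    using reduced_loss_nonneg[OF assms] measurable_reduced_loss[OF assms]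
    unfolding nn_integral_weighted_loss[OF assms]
    by (intro integral_eq_nn_integral[symmetric]) (auto simp: gauss_vec_def std_gauss_on_def split_beta')
  finally show ?thesis .
qed

end


theorem proposition4:
  fixes D Lbar :: nat
    and PL :: "nat pmf"
    and g :: "nat \<Rightarrow> nat \<Rightarrow> (nat \<Rightarrow> real) \<Rightarrow> real"
    and \<sigma> :: "nat \<Rightarrow> (nat \<Rightarrow> real) \<Rightarrow> (nat \<Rightarrow> real)"
    and ks vs k v :: "nat \<Rightarrow> real"
  assumes D: "D \<ge> 1" and Lbar: "Lbar \<ge> 1"
    and PL: "set_pmf PL \<subseteq> {1..Lbar}"
    and g_meas: "\<And>L eps. eps < L \<Longrightarrow> g L eps \<in> borel_measurable (borel_vec L)"
    and g_nonneg: "\<And>L eps x. eps < L \<Longrightarrow> g L eps x \<ge> 0"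
    and g_norm: "\<And>L eps. eps < L \<Longrightarrow> (\<integral>chi. g L eps chi \<partial>gauss_vec L) = 1"
    and \<sigma>_meas: "\<And>L l. l < L \<Longrightarrow> (\<lambda>x. \<sigma> L x l) \<in> borel_measurable (borel_vec L)"
    and ks_norm: "dotp D ks ks = real D" and vs_norm: "dotp D vs vs = real D"
    and ks_vs: "dotp D ks vs = 0"
    and k_vs: "dotp D k vs = 0" and v_ks: "dotp D v ks = 0" and k_v: "dotp D k v = 0"
    and fin_lhs: "\<And>L eps. L \<in> set_pmf PL \<Longrightarrow> eps < L \<Longrightarrow>
        integrable (data_X g L D ks eps) (\<lambda>X. (proj L D X vs eps - model_out \<sigma> L D k v X)\<^sup>2)"
    and fin_rhs: "\<And>L eps. L \<in> set_pmf PL \<Longrightarrow> eps < L \<Longrightarrow>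
        integrable (gauss_vec L \<Otimes>\<^sub>M gauss_vec L) (\<lambda>(chi, xi).
          (let m_kk = dotp D k ks / D; m_vv = dotp D v vs / D;
               R_kk = sqrt (dotp D k k / D - m_kk\<^sup>2); R_vv = sqrt (dotp D v v / D - m_vv\<^sup>2);
               s = \<sigma> L (vec L (\<lambda>l. m_kk * chi l + R_kk * xi l))
           in g L eps chi * (1 - 2 * m_vv * s eps + (m_vv\<^sup>2 + R_vv\<^sup>2) * (\<Sum>l<L. s l * s l))))"
  shows "risk PL g \<sigma> D ks vs k v =
     measure_pmf.expectation PL (\<lambda>L.
       measure_pmf.expectation (pmf_of_set {..<L}) (\<lambda>eps.
         \<integral>(chi, xi). (let m_kk = dotp D k ks / D; m_vv = dotp D v vs / D;
               R_kk = sqrt (dotp D k k / D - m_kk\<^sup>2); R_vv = sqrt (dotp D v v / D - m_vv\<^sup>2);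
               s = \<sigma> L (vec L (\<lambda>l. m_kk * chi l + R_kk * xi l))
           in g L eps chi * (1 - 2 * m_vv * s eps + (m_vv\<^sup>2 + R_vv\<^sup>2) * (\<Sum>l<L. s l * s l)))
         \<partial>(gauss_vec L \<Otimes>\<^sub>M gauss_vec L)))"
proof -
  interpret risk_setting D ks vs k v g \<sigma>
    using D ks_norm vs_norm ks_vs k_vs v_ks k_v g_meas g_nonneg \<sigma>_meas by unfold_locales
  have "(\<integral>X. (proj L D X vs eps - model_out \<sigma> L D k v X)\<^sup>2 \<partial>data_X g L D ks eps)
      = (\<integral>(chi, xi). reduced_loss L eps chi xi \<partial>(gauss_vec L \<Otimes>\<^sub>M gauss_vec L))"
    if "L \<in> set_pmf PL" "eps \<in> set_pmf (pmf_of_set {..<L})" for L eps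
  proof -
    have "0 < L" using PL that(1) by auto
    then have "{..<L} \<noteq> {}" by auto
    with that(2) show ?thesis by (intro integral_data_X_residual) simp
  qed
  then show ?thesis
    unfolding risk_def
    by (auto simp: reduced_loss_def m_kk_def m_vv_def R_kk_def R_vv_def Let_def
        intro!: integral_cong_AE AE_pmfI)
qed

end
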